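(* Let $A$ be an integral domain containing $\mathbb{Q}$, let $R:=A/\mathbb{Q}^\times$ be the quotient hyperring, $\pi:A\to R$ the canonical projection, $X=(\operatorname{Spec}A,\mathcal{O}_X)$ the usual affine scheme and $Y=(\operatorname{Spec}R,\mathcal{O}_Y)$ the hyperring scheme of $R$. Then: (1) the map $\varphi:\operatorname{Spec}R\to\operatorname{Spec}A$, $\mathfrak{p}\mapsto\pi^{-1}(\mathfrak{p})$, is a homeomorphism; (2) for every nonempty open subset $U\subseteq X$, $\mathcal{O}_Y(\varphi^{-1}(U))\cong\mathcal{O}_X(U)/\mathbb{Q}^\times$ as hyperrings.
   Context: For a commutative ring $B$ and a subgroup $G$ of its unit group, the quotient hyperring $B/G$ is the set of cosets $bG$ with $(xG)(yG)=xyG$ and $xG+yG=\{qG\mid q=xt+ys,\ t,s\in G\}$; for nonempty $U$, $\mathcal{O}_X(U)$ is an integral domain containing $\mathbb{Q}$, so $\mathcal{O}_X(U)/\mathbb{Q}^\times$ is defined. $R$ is a hyperring without zero-divisors. Hyperrings, hyperideals ($a-rb\subseteq I$ for $a,b\in I$), prime hyperideals, and $\operatorname{Spec}R$ with the Zariski topology (closed sets $V(I)$) are as for rings. For a multiplicative submonoid $T$ of $R$, $T^{-1}R$ is $R\times T$ modulo $(r_1,t_1)\sim(r_2,t_2)\iff xr_1t_2=xr_2t_1$ for some $x\in T$, with $\frac{r_1}{t_1}+\frac{r_2}{t_2}=\{\frac y{t_1t_2}\mid y\in r_1t_2+t_1r_2\}$ and componentwise multiplication; $R_\mathfrak{p}=(R\setminus\mathfrak{p})^{-1}R$.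 The sheaf $\mathcal{O}_Y$: $\mathcal{O}_Y(V)$ is the set of maps $s:V\to\bigsqcup_{\mathfrak{p}\in V}R_\mathfrak{p}$, $s(\mathfrak{p})\in R_\mathfrak{p}$, such that each point of $V$ has a neighbourhood on which $s(\mathfrak{q})=\frac af$ for fixed $a,f\in R$ with $f\notin\mathfrak{q}$; multiplication is pointwise and $s+t=\{r\mid r(\mathfrak{p})\in s(\mathfrak{p})+t(\mathfrak{p})\ \forall\mathfrak{p}\in V\}$. *)

theory Defs
  imports Main
begin

record 'a hyperring =
  hcarrier :: "'a set"
  hplus :: "'a \<Rightarrow> 'a \<Rightarrow> 'a set"
  htimes :: "'a \<Rightarrow> 'a \<Rightarrow> 'a"
  hzero :: 'a
  hone :: 'a

definition ring_hyp :: "'a::comm_ring_1 hyperring" where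
  "ring_hyp = \<lparr>hcarrier = UNIV, hplus = (\<lambda>x y. {x + y}), htimes = (*), hzero = 0, hone = 1\<rparr>"

definition hneg :: "('a, 'm) hyperring_scheme \<Rightarrow> 'a \<Rightarrow> 'a" where
  "hneg H x = (THE y. y \<in> hcarrier H \<and> hzero H \<in> hplus H x y)"

definition hideal :: "('a, 'm) hyperring_scheme \<Rightarrow> 'a set \<Rightarrow> bool" where
  "hideal H I \<longleftrightarrow> I \<subseteq> hcarrier H \<and> I \<noteq> {} \<and>
     (\<forall>a\<in>I. \<forall>b\<in>I. \<forall>r\<in>hcarrier H. hplus H a (hneg H (htimes H r b)) \<subseteq> I)"

definition hprime :: "('a, 'm) hyperring_scheme \<Rightarrow> 'a set \<Rightarrow> bool" where
  "hprime H P \<longleftrightarrow> hideal H P \<and> P \<noteq> hcarrier H \<and>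
     (\<forall>a\<in>hcarrier H. \<forall>b\<in>hcarrier H. htimes H a b \<in> P \<longrightarrow> a \<in> P \<or> b \<in> P)"

definition hSpec :: "('a, 'm) hyperring_scheme \<Rightarrow> 'a set set" where
  "hSpec H = {P. hprime H P}"

definition hV :: "('a, 'm) hyperring_scheme \<Rightarrow> 'a set \<Rightarrow> 'a set set" where
  "hV H I = {P \<in> hSpec H. I \<subseteq> P}"

definition zopen :: "('a, 'm) hyperring_scheme \<Rightarrow> 'a set set \<Rightarrow> bool" where
  "zopen H U \<longleftrightarrow> (\<exists>I. hideal H I \<and> U = hSpec H - hV H I)"

definition hcoset :: "('a, 'm) hyperring_scheme \<Rightarrow> 'a set \<Rightarrow> 'a \<Rightarrow> 'a set" where
  "hcoset B G x = {htimes B x g | g. g \<in> G}"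

definition quot_times :: "('a, 'm) hyperring_scheme \<Rightarrow> 'a set \<Rightarrow> 'a set \<Rightarrow> 'a set \<Rightarrow> 'a set" where
  "quot_times B G X Y = (SOME Z. \<exists>x y. x \<in> hcarrier B \<and> y \<in> hcarrier B \<and>
       X = hcoset B G x \<and> Y = hcoset B G y \<and> Z = hcoset B G (htimes B x y))"

definition hquot :: "('a, 'm) hyperring_scheme \<Rightarrow> 'a set \<Rightarrow> 'a set hyperring" where
  "hquot B G = \<lparr>hcarrier = hcoset B G ` hcarrier B,
     hplus = (\<lambda>X Y. {hcoset B G q | q x y t s. x \<in> hcarrier B \<and> y \<in> hcarrier B \<and>
                 X = hcoset B G x \<and> Y = hcoset B G y \<and> t \<in> G \<and> s \<in> G \<and>
                 q \<in> hplus B (htimes B x t) (htimes B y s)}),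
     htimes = quot_times B G,
     hzero = hcoset B G (hzero B),
     hone = hcoset B G (hone B)\<rparr>"

text \<open>The image of \<open>\<rat>\<^sup>\<times>\<close> in a ring containing \<open>\<rat>\<close>.\<close>
definition rat_units :: "'a::comm_ring_1 set" where
  "rat_units = {u. \<exists>p q :: int. p \<noteq> 0 \<and> q \<noteq> 0 \<and> of_int q * u = of_int p}"

text \<open>The class of (r,t) in \<open>T\<^sup>-\<^sup>1 H\<close>.\<close>
definition hfrac :: "('a, 'm) hyperring_scheme \<Rightarrow> 'a set \<Rightarrow> 'a \<Rightarrow> 'a \<Rightarrow> ('a \<times> 'a) set" where
  "hfrac H T r t = {(r', t'). r' \<in> hcarrier H \<and> t' \<in> T \<and>
      (\<exists>x\<in>T. htimes H x (htimes H r t') = htimes H x (htimes H r' t))}"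

definition hloc :: "('a, 'm) hyperring_scheme \<Rightarrow> 'a set \<Rightarrow> ('a \<times> 'a) set set" where
  "hloc H P = {hfrac H (hcarrier H - P) r t | r t. r \<in> hcarrier H \<and> t \<in> hcarrier H - P}"

definition loc_plus :: "('a, 'm) hyperring_scheme \<Rightarrow> 'a set \<Rightarrow> ('a \<times> 'a) set \<Rightarrow> ('a \<times> 'a) set \<Rightarrow> ('a \<times> 'a) set set" where
  "loc_plus H P u v = {hfrac H (hcarrier H - P) y (htimes H t1 t2) | y r1 t1 r2 t2.
      r1 \<in> hcarrier H \<and> r2 \<in> hcarrier H \<and> t1 \<in> hcarrier H - P \<and> t2 \<in> hcarrier H - P \<and>
      u = hfrac H (hcarrier H - P) r1 t1 \<and> v = hfrac H (hcarrier H - P) r2 t2 \<and>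
      y \<in> hplus H (htimes H r1 t2) (htimes H t1 r2)}"

definition loc_times :: "('a, 'm) hyperring_scheme \<Rightarrow> 'a set \<Rightarrow> ('a \<times> 'a) set \<Rightarrow> ('a \<times> 'a) set \<Rightarrow> ('a \<times> 'a) set" where
  "loc_times H P u v = (SOME w. \<exists>r1 t1 r2 t2.
      r1 \<in> hcarrier H \<and> r2 \<in> hcarrier H \<and> t1 \<in> hcarrier H - P \<and> t2 \<in> hcarrier H - P \<and>
      u = hfrac H (hcarrier H - P) r1 t1 \<and> v = hfrac H (hcarrier H - P) r2 t2 \<and>
      w = hfrac H (hcarrier H - P) (htimes H r1 r2) (htimes H t1 t2))"

definition hsections :: "('a, 'm) hyperring_scheme \<Rightarrow> 'a set set \<Rightarrow> ('a set \<Rightarrow> ('a \<times> 'a) set) set" where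
  "hsections H V = {s. (\<forall>P. P \<notin> V \<longrightarrow> s P = undefined) \<and> (\<forall>P\<in>V. s P \<in> hloc H P) \<and>
      (\<forall>P\<in>V. \<exists>W a f. zopen H W \<and> P \<in> W \<and> W \<subseteq> V \<and> a \<in> hcarrier H \<and> f \<in> hcarrier H \<and>
          (\<forall>Q\<in>W. f \<notin> Q \<and> s Q = hfrac H (hcarrier H - Q) a f))}"

definition const_sec :: "('a, 'm) hyperring_scheme \<Rightarrow> 'a set set \<Rightarrow> 'a \<Rightarrow> 'a set \<Rightarrow> ('a \<times> 'a) set" where
  "const_sec H V a = (\<lambda>P. if P \<in> V then hfrac H (hcarrier H - P) a (hone H) else undefined)"

definition hsheaf :: "('a, 'm) hyperring_scheme \<Rightarrow> 'a set set \<Rightarrow> ('a set \<Rightarrow> ('a \<times> 'a) set) hyperring" where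
  "hsheaf H V = \<lparr>hcarrier = hsections H V,
     hplus = (\<lambda>s t. {r \<in> hsections H V. \<forall>P\<in>V. r P \<in> loc_plus H P (s P) (t P)}),
     htimes = (\<lambda>s t P. if P \<in> V then loc_times H P (s P) (t P) else undefined),
     hzero = const_sec H V (hzero H),
     hone = const_sec H V (hone H)\<rparr>"

definition hyperring_iso :: "('a \<Rightarrow> 'b) \<Rightarrow> ('a, 'm) hyperring_scheme \<Rightarrow> ('b, 'n) hyperring_scheme \<Rightarrow> bool" where
  "hyperring_iso f H K \<longleftrightarrow> bij_betw f (hcarrier H) (hcarrier K) \<and>
     (\<forall>x\<in>hcarrier H. \<forall>y\<in>hcarrier H. f (htimes H x y) = htimes K (f x) (f y) \<and>
                                      f ` hplus H x y = hplus K (f x) (f y)) \<and>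
     f (hzero H) = hzero K \<and> f (hone H) = hone K"

end

theory Submission
  imports Defs "HOL-Computational_Algebra.Fraction_Field"
begin

text \<open>Since \<open>\<rat>\<^sup>\<times>\<close> consists of units of \<open>A\<close>, every ideal \<open>J\<close> of \<open>A\<close> is stable under
  multiplication by \<open>\<rat>\<^sup>\<times>\<close>; hence \<open>J \<mapsto> \<pi>(J)\<close> and \<open>I \<mapsto> \<pi>\<^sup>-\<^sup>1(I)\<close> are mutually inverse
  bijections between the ideals (and the primes) of \<open>A\<close> and of \<open>R = A/\<rat>\<^sup>\<times>\<close>, compatible with
  inclusion, so \<open>\<phi>\<close> is a homeomorphism.

  As \<open>A\<close> is a domain, the zero ideal lies in every nonempty open \<open>U\<close>, and a section over \<open>U\<close>
  is determined by its germ there: \<open>O\<^sub>X(U)\<close> is the ring of fractions \<open>v \<in> Frac A\<close> that are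
  regular on \<open>U\<close>. The same argument on \<open>Y\<close> identifies \<open>O\<^sub>Y(\<phi>\<^sup>-\<^sup>1(U))\<close> with these fractions up to
  factors in \<open>\<rat>\<^sup>\<times>\<close>, with the product of classes and the hyper-sum \<open>{c\<^sub>1 v + c\<^sub>2 w}\<close>,
  \<open>c\<^sub>i \<in> \<rat>\<^sup>\<times>\<close>. These are exactly the cosets of \<open>O\<^sub>X(U)\<close> modulo the constant sections
  \<open>\<rat>\<^sup>\<times>\<close>, with the operations of the quotient hyperring.\<close>

section \<open>Localizations, quotients and isomorphisms of hyperrings\<close>

lemma loc_times_eqI:
  assumes "a \<in> hcarrier H" "b \<in> hcarrier H" "f \<in> hcarrier H - P" "g \<in> hcarrier H - P"
    and "u = hfrac H (hcarrier H - P) a f" "v = hfrac H (hcarrier H - P) b g"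
    and well_defined: "\<And>a' f' b' g'. a' \<in> hcarrier H \<Longrightarrow> b' \<in> hcarrier H \<Longrightarrow>
      f' \<in> hcarrier H - P \<Longrightarrow> g' \<in> hcarrier H - P \<Longrightarrow>
      u = hfrac H (hcarrier H - P) a' f' \<Longrightarrow> v = hfrac H (hcarrier H - P) b' g' \<Longrightarrow>
      hfrac H (hcarrier H - P) (htimes H a' b') (htimes H f' g') = w"
  shows "loc_times H P u v = w"
  unfolding loc_times_def
proof (rule someI2_ex)
  show "\<exists>w r1 t1 r2 t2. r1 \<in> hcarrier H \<and> r2 \<in> hcarrier H \<and> t1 \<in> hcarrier H - P \<and>
      t2 \<in> hcarrier H - P \<and> u = hfrac H (hcarrier H - P) r1 t1 \<and> v = hfrac H (hcarrier H - P) r2 t2 \<and>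
      w = hfrac H (hcarrier H - P) (htimes H r1 r2) (htimes H t1 t2)"
    using assms(1-6) by blast
qed (elim exE conjE, metis well_defined)

lemma htimes_hquot_hcoset:
  assumes "x \<in> hcarrier B" "y \<in> hcarrier B"
    and well_defined: "\<And>x' y'. x' \<in> hcarrier B \<Longrightarrow> y' \<in> hcarrier B \<Longrightarrow>
      hcoset B G x = hcoset B G x' \<Longrightarrow> hcoset B G y = hcoset B G y' \<Longrightarrow>
      hcoset B G (htimes B x' y') = hcoset B G (htimes B x y)"
  shows "htimes (hquot B G) (hcoset B G x) (hcoset B G y) = hcoset B G (htimes B x y)"
proof -
  have "quot_times B G (hcoset B G x) (hcoset B G y) = hcoset B G (htimes B x y)"
    unfolding quot_times_def
  proof (rule someI2_ex)
    show "\<exists>Z x' y'. x' \<in> hcarrier B \<and> y' \<in> hcarrier B \<and> hcoset B G x = hcoset B G x' \<and>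
        hcoset B G y = hcoset B G y' \<and> Z = hcoset B G (htimes B x' y')"
      using assms(1,2) by blast
  qed (elim exE conjE, metis well_defined)
  then show ?thesis
    by (simp add: hquot_def)
qed

lemma hsections_undefined: "s \<in> hsections H V \<Longrightarrow> P \<notin> V \<Longrightarrow> s P = undefined"
  unfolding hsections_def by simp

lemma hsections_hloc: "s \<in> hsections H V \<Longrightarrow> P \<in> V \<Longrightarrow> s P \<in> hloc H P"
  unfolding hsections_def by blast

lemma hsections_locally_hfracE:
  assumes "s \<in> hsections H V" "P \<in> V"
  obtains W a f where "zopen H W" "P \<in> W" "W \<subseteq> V" "a \<in> hcarrier H" "f \<in> hcarrier H"
    "\<forall>Q\<in>W. f \<notin> Q \<and> s Q = hfrac H (hcarrier H - Q) a f"
proof -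
  have "\<exists>W a f. zopen H W \<and> P \<in> W \<and> W \<subseteq> V \<and> a \<in> hcarrier H \<and> f \<in> hcarrier H \<and>
      (\<forall>Q\<in>W. f \<notin> Q \<and> s Q = hfrac H (hcarrier H - Q) a f)"
    using assms(1)[unfolded hsections_def, THEN CollectD, THEN conjunct2, THEN conjunct2] assms(2) by (rule bspec)
  then show thesis
    by (elim exE conjE) (rule that)
qed

lemma hyperring_iso_common_parametrization:
  assumes carrier: "hcarrier H = \<alpha> ` S" "hcarrier K = \<beta> ` S"
    and same_fibres: "\<And>x y. x \<in> S \<Longrightarrow> y \<in> S \<Longrightarrow> \<alpha> x = \<alpha> y \<longleftrightarrow> \<beta> x = \<beta> y"
    and times: "\<And>x y. x \<in> S \<Longrightarrow> y \<in> S \<Longrightarrow>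
      m x y \<in> S \<and> htimes H (\<alpha> x) (\<alpha> y) = \<alpha> (m x y) \<and> htimes K (\<beta> x) (\<beta> y) = \<beta> (m x y)"
    and plus: "\<And>x y. x \<in> S \<Longrightarrow> y \<in> S \<Longrightarrow>
      P x y \<subseteq> S \<and> hplus H (\<alpha> x) (\<alpha> y) = \<alpha> ` P x y \<and> hplus K (\<beta> x) (\<beta> y) = \<beta> ` P x y"
    and zero: "z \<in> S" "hzero H = \<alpha> z" "hzero K = \<beta> z"
    and one: "u \<in> S" "hone H = \<alpha> u" "hone K = \<beta> u"
  shows "\<exists>f. hyperring_iso f H K"
proof -
  define f where "f h = \<beta> (SOME x. x \<in> S \<and> \<alpha> x = h)" for h
  have f: "f (\<alpha> x) = \<beta> x" if "x \<in> S" for x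
  proof -
    have "\<exists>y. y \<in> S \<and> \<alpha> y = \<alpha> x"
      using that by blast
    then have "(SOME y. y \<in> S \<and> \<alpha> y = \<alpha> x) \<in> S \<and> \<alpha> (SOME y. y \<in> S \<and> \<alpha> y = \<alpha> x) = \<alpha> x"
      by (rule someI_ex)
    then show ?thesis
      unfolding f_def using same_fibres that by blast
  qed
  have f_image: "f ` \<alpha> ` T = \<beta> ` T" if "T \<subseteq> S" for T
    using that f by (force simp: image_image)
  have "bij_betw f (hcarrier H) (hcarrier K)"
    unfolding bij_betw_def inj_on_def carrier using f same_fibres f_image[of S] by auto
  moreover have "f (htimes H a b) = htimes K (f a) (f b) \<and> f ` hplus H a b = hplus K (f a) (f b)"
    if ab: "a \<in> hcarrier H" "b \<in> hcarrier H" for a b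
  proof -
    obtain x y where "x \<in> S" "y \<in> S" "a = \<alpha> x" "b = \<alpha> y"
      using ab unfolding carrier by blast
    then show ?thesis
      using times[of x y] plus[of x y] f f_image by simp
  qed
  ultimately have "hyperring_iso f H K"
    unfolding hyperring_iso_def using f zero one by simp
  then show ?thesis
    by blast
qed

section \<open>A commutative ring as a hyperring\<close>

lemma ring_hyp_simps [simp]:
  "hcarrier (ring_hyp :: 'a::comm_ring_1 hyperring) = UNIV"
  "hplus (ring_hyp :: 'a hyperring) x y = {x + y}"
  "htimes (ring_hyp :: 'a hyperring) x y = x * y"
  "hzero (ring_hyp :: 'a hyperring) = 0"
  "hone (ring_hyp :: 'a hyperring) = 1"
  by (simp_all add: ring_hyp_def)

lemma hneg_ring_hyp [simp]: "hneg (ring_hyp :: 'a::comm_ring_1 hyperring) x = - x"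
  unfolding hneg_def by (rule the_equality) (auto simp: add_eq_0_iff2 add.commute)

lemma hideal_ring_hyp_iff:
  "hideal (ring_hyp :: 'a::comm_ring_1 hyperring) I \<longleftrightarrow> I \<noteq> {} \<and> (\<forall>a\<in>I. \<forall>b\<in>I. \<forall>r. a - r * b \<in> I)"
  unfolding hideal_def by auto

context
  fixes I :: "'a::comm_ring_1 set"
  assumes I: "hideal ring_hyp I"
begin

lemma hideal_ring_hyp_zero: "0 \<in> I"
  using I unfolding hideal_ring_hyp_iff by (metis all_not_in_conv diff_self mult_1)

lemma hideal_ring_hyp_mult_left: "b \<in> I \<Longrightarrow> r * b \<in> I"
  using I hideal_ring_hyp_zero unfolding hideal_ring_hyp_iff by (metis diff_0 minus_minus mult_minus_left)

lemma hideal_ring_hyp_mult_right: "b \<in> I \<Longrightarrow> b * r \<in> I"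
  using hideal_ring_hyp_mult_left by (simp add: mult.commute)

lemma hideal_ring_hyp_add: "a \<in> I \<Longrightarrow> b \<in> I \<Longrightarrow> a + b \<in> I"
  using I unfolding hideal_ring_hyp_iff by (metis diff_minus_eq_add mult_minus1)

end

lemma hprime_ring_hyp_iff:
  "hprime (ring_hyp :: 'a::comm_ring_1 hyperring) p \<longleftrightarrow>
     hideal ring_hyp p \<and> p \<noteq> UNIV \<and> (\<forall>a b. a * b \<in> p \<longrightarrow> a \<in> p \<or> b \<in> p)"
  unfolding hprime_def by auto

context
  fixes p :: "'a::comm_ring_1 set"
  assumes p: "p \<in> hSpec ring_hyp"
begin

lemma hSpec_ring_hyp_hideal: "hideal ring_hyp p"
  using p unfolding hSpec_def hprime_ring_hyp_iff by simp

lemma hSpec_ring_hyp_zero: "0 \<in> p"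
  using hideal_ring_hyp_zero[OF hSpec_ring_hyp_hideal] .

lemma hSpec_ring_hyp_nonzero: "f \<notin> p \<Longrightarrow> f \<noteq> 0"
  using hSpec_ring_hyp_zero by auto

lemma hSpec_ring_hyp_one: "1 \<notin> p"
  using p hideal_ring_hyp_mult_right[OF hSpec_ring_hyp_hideal, of 1]
  unfolding hSpec_def hprime_ring_hyp_iff by auto

lemma hSpec_ring_hyp_mult: "f \<notin> p \<Longrightarrow> g \<notin> p \<Longrightarrow> f * g \<notin> p"
  using p unfolding hSpec_def hprime_ring_hyp_iff by blast

end

lemma zero_in_hSpec_ring_hyp: "{0::'a::idom} \<in> hSpec ring_hyp"
  unfolding hSpec_def hprime_ring_hyp_iff hideal_ring_hyp_iff
  by (auto, metis UNIV_I singletonD zero_neq_one)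

lemma zopen_subset_hSpec: "zopen H U \<Longrightarrow> U \<subseteq> hSpec H"
  unfolding zopen_def by auto

lemma zero_in_zopen_ring_hyp:
  assumes "zopen (ring_hyp :: 'a::idom hyperring) U" "U \<noteq> {}"
  shows "{0} \<in> U"
proof -
  obtain I where I: "hideal ring_hyp I" "U = hSpec ring_hyp - hV ring_hyp I"
    using assms unfolding zopen_def by blast
  obtain p where "p \<in> hSpec ring_hyp" "\<not> I \<subseteq> p"
    using I assms unfolding hV_def by auto
  then have "\<not> I \<subseteq> {0}"
    using hSpec_ring_hyp_zero by blast
  then show ?thesis
    using I zero_in_hSpec_ring_hyp unfolding hV_def by auto
qed

lemma zopen_ring_hyp_Int:
  assumes "zopen (ring_hyp :: 'a::comm_ring_1 hyperring) U" "zopen ring_hyp U'"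
  shows "zopen ring_hyp (U \<inter> U')"
proof -
  obtain I I' where I: "hideal ring_hyp I" "U = hSpec ring_hyp - hV ring_hyp I"
    and I': "hideal ring_hyp I'" "U' = hSpec ring_hyp - hV ring_hyp I'"
    using assms unfolding zopen_def by blast
  have "hideal ring_hyp (I \<inter> I')"
    using I(1) I'(1) hideal_ring_hyp_zero[OF I(1)] hideal_ring_hyp_zero[OF I'(1)]
    unfolding hideal_ring_hyp_iff by blast
  moreover have "U \<inter> U' = hSpec ring_hyp - hV ring_hyp (I \<inter> I')"
  proof (intro equalityI subsetI)
    fix p assume "p \<in> U \<inter> U'"
    then obtain a b where p: "p \<in> hSpec ring_hyp" "a \<in> I" "a \<notin> p" "b \<in> I'" "b \<notin> p"
      using I I' unfolding hV_def by auto
    then have "a * b \<in> I \<inter> I'" "a * b \<notin> p"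
      using hideal_ring_hyp_mult_left[OF I'(1)] hideal_ring_hyp_mult_right[OF I(1)]
        hSpec_ring_hyp_mult[OF p(1)] by auto
    then show "p \<in> hSpec ring_hyp - hV ring_hyp (I \<inter> I')"
      using p(1) unfolding hV_def by blast
  qed (use I I' in \<open>auto simp: hV_def\<close>)
  ultimately show ?thesis
    unfolding zopen_def by blast
qed

lemma zopen_ring_hyp_basic: "zopen (ring_hyp :: 'a::comm_ring_1 hyperring) {p \<in> hSpec ring_hyp. f \<notin> p}"
proof -
  let ?I = "range (\<lambda>r. r * f)"
  have "a - r * b \<in> ?I" if ab: "a \<in> ?I" "b \<in> ?I" for a b r
  proof -
    obtain x y where "a = x * f" "b = y * f"
      using ab by blast
    then have "a - r * b = (x - r * y) * f"
      by (simp add: algebra_simps)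
    then show ?thesis by blast
  qed
  then have "hideal ring_hyp ?I"
    unfolding hideal_ring_hyp_iff by blast
  moreover have "{p \<in> hSpec ring_hyp. f \<notin> p} = hSpec ring_hyp - hV ring_hyp ?I"
    using hideal_ring_hyp_mult_left[OF hSpec_ring_hyp_hideal] unfolding hV_def
    by (auto, metis mult_1 rangeI subsetD)
  ultimately show ?thesis
    unfolding zopen_def by blast
qed

section \<open>Sections of the structure sheaf of a domain as fractions\<close>

text \<open>The localization \<open>A\<^sub>p\<close> is identified with the fractions \<open>a / f \<in> Frac A\<close> with \<open>f \<notin> p\<close>;
  \<open>frac_class p v\<close> is the element of \<open>A\<^sub>p\<close>, encoded as in \<open>hfrac\<close>, that corresponds to \<open>v\<close>.\<close>

definition regular_at :: "'a::idom set \<Rightarrow> 'a fract \<Rightarrow> bool" where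
  "regular_at p v \<longleftrightarrow> (\<exists>a f. f \<notin> p \<and> v = Fract a f)"

definition frac_class :: "'a::idom set \<Rightarrow> 'a fract \<Rightarrow> ('a \<times> 'a) set" where
  "frac_class p v = {(a, f). f \<notin> p \<and> Fract a f = v}"

lemma hfrac_ring_hyp:
  assumes p: "p \<in> hSpec ring_hyp" and f: "f \<notin> p"
  shows "hfrac ring_hyp (UNIV - p) a f = frac_class p (Fract a f)"
proof -
  have "(r, t) \<in> hfrac ring_hyp (UNIV - p) a f \<longleftrightarrow> t \<notin> p \<and> a * t = r * f" for r t
  proof
    assume "(r, t) \<in> hfrac ring_hyp (UNIV - p) a f"
    then obtain x where "x \<notin> p" "t \<notin> p" "x * (a * t) = x * (r * f)"
      unfolding hfrac_def by auto
    then show "t \<notin> p \<and> a * t = r * f"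
      using hSpec_ring_hyp_nonzero[OF p] by simp
  next
    assume "t \<notin> p \<and> a * t = r * f"
    then show "(r, t) \<in> hfrac ring_hyp (UNIV - p) a f"
      unfolding hfrac_def using hSpec_ring_hyp_one[OF p] by force
  qed
  then show ?thesis
    unfolding frac_class_def using f hSpec_ring_hyp_nonzero[OF p]
    by (auto simp: eq_fract mult.commute)
qed

lemma frac_class_inject: "regular_at p v \<Longrightarrow> frac_class p v = frac_class p w \<Longrightarrow> v = w"
  unfolding regular_at_def frac_class_def by auto

lemma hloc_ring_hyp:
  assumes "p \<in> hSpec ring_hyp"
  shows "hloc ring_hyp p = frac_class p ` Collect (regular_at p)"
proof -
  have "hloc ring_hyp p = {frac_class p (Fract a f) | a f. f \<notin> p}"
    unfolding hloc_def using hfrac_ring_hyp[OF assms] by (auto; metis)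
  then show ?thesis
    unfolding regular_at_def by auto
qed

context
  fixes p :: "'a::idom set"
  assumes p: "p \<in> hSpec ring_hyp"
begin

lemma regular_at_mult: "regular_at p v \<Longrightarrow> regular_at p w \<Longrightarrow> regular_at p (v * w)"
  unfolding regular_at_def using hSpec_ring_hyp_mult[OF p] by fastforce

lemma regular_at_add: "regular_at p v \<Longrightarrow> regular_at p w \<Longrightarrow> regular_at p (v + w)"
  unfolding regular_at_def
  using hSpec_ring_hyp_mult[OF p] hSpec_ring_hyp_nonzero[OF p] by fastforce

lemma regular_at_Fract_one: "regular_at p (Fract a 1)"
  unfolding regular_at_def using hSpec_ring_hyp_one[OF p] by blast

lemma frac_class_eq_hfrac:
  "regular_at p v \<Longrightarrow> t \<notin> p \<Longrightarrow> frac_class p v = hfrac ring_hyp (UNIV - p) r t \<Longrightarrow> v = Fract r t"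
  using hfrac_ring_hyp[OF p] frac_class_inject by metis

lemma loc_times_ring_hyp:
  assumes v: "regular_at p v" and w: "regular_at p w"
  shows "loc_times ring_hyp p (frac_class p v) (frac_class p w) = frac_class p (v * w)"
proof -
  obtain a f b g where fg: "f \<notin> p" "g \<notin> p" and "v = Fract a f" "w = Fract b g"
    using v w unfolding regular_at_def by blast
  then have "frac_class p v = hfrac ring_hyp (UNIV - p) a f" "frac_class p w = hfrac ring_hyp (UNIV - p) b g"
    using hfrac_ring_hyp[OF p] by simp_all
  moreover have "hfrac ring_hyp (UNIV - p) (a' * b') (f' * g') = frac_class p (v * w)"
    if "f' \<notin> p" "g' \<notin> p" "frac_class p v = hfrac ring_hyp (UNIV - p) a' f'"
      "frac_class p w = hfrac ring_hyp (UNIV - p) b' g'" for a' f' b' g'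
    using that frac_class_eq_hfrac[OF v] frac_class_eq_hfrac[OF w]
      hfrac_ring_hyp[OF p hSpec_ring_hyp_mult[OF p that(1,2)]] by simp
  ultimately show ?thesis
    using fg by (intro loc_times_eqI[where a = a and f = f and b = b and g = g]) simp_all
qed

lemma loc_plus_ring_hyp:
  assumes v: "regular_at p v" and w: "regular_at p w"
  shows "loc_plus ring_hyp p (frac_class p v) (frac_class p w) = {frac_class p (v + w)}"
proof (intro equalityI subsetI)
  fix x assume "x \<in> loc_plus ring_hyp p (frac_class p v) (frac_class p w)"
  then obtain r1 t1 r2 t2 where t: "t1 \<notin> p" "t2 \<notin> p"
    and vw: "frac_class p v = hfrac ring_hyp (UNIV - p) r1 t1" "frac_class p w = hfrac ring_hyp (UNIV - p) r2 t2"
    and x: "x = hfrac ring_hyp (UNIV - p) (r1 * t2 + t1 * r2) (t1 * t2)"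
    unfolding loc_plus_def by auto
  have "v + w = Fract (r1 * t2 + t1 * r2) (t1 * t2)"
    using frac_class_eq_hfrac[OF v t(1) vw(1)] frac_class_eq_hfrac[OF w t(2) vw(2)]
      hSpec_ring_hyp_nonzero[OF p] t by (simp add: mult.commute)
  then show "x \<in> {frac_class p (v + w)}"
    using x hfrac_ring_hyp[OF p hSpec_ring_hyp_mult[OF p t]] by simp
next
  fix x assume x: "x \<in> {frac_class p (v + w)}"
  obtain a f b g where fg: "f \<notin> p" "g \<notin> p" and "v = Fract a f" "w = Fract b g"
    using v w unfolding regular_at_def by blast
  then have "x = hfrac ring_hyp (UNIV - p) (a * g + f * b) (f * g)"
    and "frac_class p v = hfrac ring_hyp (UNIV - p) a f" "frac_class p w = hfrac ring_hyp (UNIV - p) b g"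
    using x hfrac_ring_hyp[OF p] hSpec_ring_hyp_mult[OF p fg] hSpec_ring_hyp_nonzero[OF p]
    by (simp_all add: mult.commute)
  then show "x \<in> loc_plus ring_hyp p (frac_class p v) (frac_class p w)"
    unfolding loc_plus_def using fg
    by (intro CollectI exI[of _ "a * g + f * b"] exI[of _ a] exI[of _ f] exI[of _ b] exI[of _ g]) simp
qed

end

definition regular_on :: "'a::idom set set \<Rightarrow> 'a fract \<Rightarrow> bool" where
  "regular_on U v \<longleftrightarrow> (\<forall>p\<in>U. regular_at p v)"

definition frac_section :: "'a::idom set set \<Rightarrow> 'a fract \<Rightarrow> 'a set \<Rightarrow> ('a \<times> 'a) set" where
  "frac_section U v = (\<lambda>p. if p \<in> U then frac_class p v else undefined)"

context
  fixes U :: "'a::idom set set"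
  assumes U: "U \<subseteq> hSpec ring_hyp"
begin

lemma regular_on_mult: "regular_on U v \<Longrightarrow> regular_on U w \<Longrightarrow> regular_on U (v * w)"
  unfolding regular_on_def using regular_at_mult U by blast

lemma regular_on_add: "regular_on U v \<Longrightarrow> regular_on U w \<Longrightarrow> regular_on U (v + w)"
  unfolding regular_on_def using regular_at_add U by blast

lemma regular_on_Fract_one: "regular_on U (Fract a 1)"
  unfolding regular_on_def using regular_at_Fract_one U by blast

lemma const_sec_ring_hyp: "const_sec ring_hyp U a = frac_section U (Fract a 1)"
  using U hfrac_ring_hyp hSpec_ring_hyp_one
  unfolding const_sec_def frac_section_def by fastforce

lemma htimes_hsheaf_ring_hyp:
  assumes "regular_on U v" "regular_on U w"
  shows "htimes (hsheaf ring_hyp U) (frac_section U v) (frac_section U w) = frac_section U (v * w)"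
proof
  fix p
  show "htimes (hsheaf ring_hyp U) (frac_section U v) (frac_section U w) p = frac_section U (v * w) p"
    using assms U loc_times_ring_hyp[of p v w]
    unfolding hsheaf_def frac_section_def regular_on_def by auto
qed

end

lemma regular_on_eq_frac_section:
  assumes "regular_on U v" "p \<in> U" "frac_section U v = frac_section U w"
  shows "v = w"
  using fun_cong[OF assms(3), of p] assms(1,2) frac_class_inject
  unfolding regular_on_def frac_section_def by (metis (full_types))

lemma frac_section_in_hsections:
  assumes U: "zopen ring_hyp U" and v: "regular_on U v"
  shows "frac_section U v \<in> hsections ring_hyp U"
  unfolding hsections_def
proof (intro CollectI conjI allI impI ballI)
  fix p assume "p \<notin> U"
  then show "frac_section U v p = undefined"
    by (simp add: frac_section_def)
next
  fix p assume p: "p \<in> U"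
  then have "p \<in> hSpec ring_hyp" "regular_at p v"
    using v zopen_subset_hSpec[OF U] unfolding regular_on_def by auto
  then show "frac_section U v p \<in> hloc ring_hyp p"
    using p unfolding frac_section_def by (simp add: hloc_ring_hyp)
next
  fix p assume p: "p \<in> U"
  then obtain a f where af: "f \<notin> p" "v = Fract a f"
    using v unfolding regular_on_def regular_at_def by blast
  define W where "W = U \<inter> {q \<in> hSpec ring_hyp. f \<notin> q}"
  have "zopen ring_hyp W"
    unfolding W_def using zopen_ring_hyp_Int[OF U zopen_ring_hyp_basic] .
  moreover have "p \<in> W" "W \<subseteq> U"
    using p af zopen_subset_hSpec[OF U] unfolding W_def by auto
  moreover have "f \<notin> q \<and> frac_section U v q = hfrac ring_hyp (hcarrier ring_hyp - q) a f" if "q \<in> W" for q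
    using that af hfrac_ring_hyp unfolding W_def frac_section_def by auto
  ultimately show "\<exists>W a f. zopen ring_hyp W \<and> p \<in> W \<and> W \<subseteq> U \<and> a \<in> hcarrier ring_hyp \<and>
      f \<in> hcarrier ring_hyp \<and> (\<forall>q\<in>W. f \<notin> q \<and> frac_section U v q = hfrac ring_hyp (hcarrier ring_hyp - q) a f)"
    by (intro exI[of _ W] exI[of _ a] exI[of _ f] conjI ballI) simp_all
qed

text \<open>A section over a nonempty open set is determined by its germ at the generic point \<open>{0}\<close>,
  which lies in every basic open set on which the section is a single fraction.\<close>

lemma hsections_ring_hypE:
  assumes U: "zopen ring_hyp U" "U \<noteq> {}" and s: "s \<in> hsections ring_hyp U"
  obtains v where "regular_on U v" "s = frac_section U v"
proof -
  have "s {0} \<in> hloc ring_hyp {0}"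
    using hsections_hloc[OF s zero_in_zopen_ring_hyp[OF U]] .
  then obtain v where v: "regular_at {0} v" "s {0} = frac_class {0} v"
    unfolding hloc_ring_hyp[OF zero_in_hSpec_ring_hyp] by blast
  have "regular_at p v \<and> s p = frac_class p v" if p: "p \<in> U" for p
  proof -
    obtain W a f where W: "zopen ring_hyp W" "p \<in> W" "W \<subseteq> U" "a \<in> hcarrier ring_hyp" "f \<in> hcarrier ring_hyp"
      and frac: "\<forall>q\<in>W. f \<notin> q \<and> s q = hfrac ring_hyp (hcarrier ring_hyp - q) a f"
      by (rule hsections_locally_hfracE[OF s p])
    have "{0} \<in> W"
      using zero_in_zopen_ring_hyp W by blast
    then have "f \<notin> {0}" "frac_class {0} v = hfrac ring_hyp (UNIV - {0}) a f"
      using frac v(2) by auto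
    then have "v = Fract a f"
      using frac_class_eq_hfrac[OF zero_in_hSpec_ring_hyp v(1)] by blast
    moreover have "f \<notin> p" "s p = hfrac ring_hyp (UNIV - p) a f"
      using frac W(2) by auto
    moreover have "p \<in> hSpec ring_hyp"
      using p zopen_subset_hSpec[OF U(1)] by blast
    ultimately show ?thesis
      using hfrac_ring_hyp unfolding regular_at_def by metis
  qed
  then have "regular_on U v" "s = frac_section U v"
    using hsections_undefined[OF s] unfolding regular_on_def frac_section_def by (auto simp: fun_eq_iff)
  then show thesis ..
qed

lemma hsections_ring_hyp:
  assumes "zopen ring_hyp U" "U \<noteq> {}"
  shows "hsections ring_hyp U = frac_section U ` Collect (regular_on U)"
  using assms frac_section_in_hsections hsections_ring_hypE by blast

lemma hplus_hsheaf_ring_hyp: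
  assumes U: "zopen ring_hyp U" "U \<noteq> {}" and v: "regular_on U v" and w: "regular_on U w"
  shows "hplus (hsheaf ring_hyp U) (frac_section U v) (frac_section U w) = {frac_section U (v + w)}"
proof -
  have Us: "U \<subseteq> hSpec ring_hyp"
    using zopen_subset_hSpec[OF U(1)] .
  have pointwise: "frac_section U u p \<in> loc_plus ring_hyp p (frac_section U v p) (frac_section U w p)
      \<longleftrightarrow> u = v + w" if p: "p \<in> U" and u: "regular_on U u" for p u
  proof -
    have "regular_at p u" "regular_at p v" "regular_at p w" "p \<in> hSpec ring_hyp"
      using p u v w Us unfolding regular_on_def by auto
    then show ?thesis
      using p loc_plus_ring_hyp frac_class_inject unfolding frac_section_def by auto
  qed
  obtain p where p: "p \<in> U"
    using U(2) by blast
  have "hplus (hsheaf ring_hyp U) (frac_section U v) (frac_section U w) =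
      {r \<in> frac_section U ` Collect (regular_on U).
        \<forall>p\<in>U. r p \<in> loc_plus ring_hyp p (frac_section U v p) (frac_section U w p)}"
    by (simp add: hsheaf_def hsections_ring_hyp[OF U])
  also have "\<dots> = {frac_section U (v + w)}"
    using pointwise p regular_on_add[OF Us v w] by auto
  finally show ?thesis .
qed

section \<open>The quotient hyperring \<open>A/\<rat>\<^sup>\<times>\<close>\<close>

lemma rat_unitsI: "p \<noteq> 0 \<Longrightarrow> q \<noteq> 0 \<Longrightarrow> of_int q * u = of_int p \<Longrightarrow> u \<in> rat_units"
  unfolding rat_units_def by blast

lemma rat_unitsE:
  assumes "u \<in> rat_units"
  obtains p q :: int where "p \<noteq> 0" "q \<noteq> 0" "of_int q * u = of_int p"
  using assms unfolding rat_units_def by blast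

lemma rat_units_one: "1 \<in> rat_units"
  by (rule rat_unitsI[of 1 1]) simp_all

lemma rat_units_mult:
  assumes "u \<in> rat_units" "v \<in> rat_units"
  shows "u * v \<in> (rat_units :: 'a::comm_ring_1 set)"
proof -
  obtain p q p' q' :: int where pq: "p \<noteq> 0" "q \<noteq> 0" "p' \<noteq> 0" "q' \<noteq> 0"
    and u: "of_int q * u = (of_int p :: 'a)" and v: "of_int q' * v = (of_int p' :: 'a)"
    using assms by (elim rat_unitsE)
  have "of_int (q * q') * (u * v) = (of_int q * u) * (of_int q' * v :: 'a)"
    by (simp add: ac_simps)
  also have "\<dots> = of_int (p * p')"
    by (simp add: u v)
  finally show ?thesis
    using pq by (intro rat_unitsI[of "p * p'" "q * q'"]) simp_all
qed

lemma rat_units_uminus: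
  assumes "u \<in> rat_units"
  shows "- u \<in> (rat_units :: 'a::comm_ring_1 set)"
proof -
  obtain p q :: int where "p \<noteq> 0" "q \<noteq> 0" "of_int q * u = (of_int p :: 'a)"
    using assms by (elim rat_unitsE)
  then show ?thesis
    by (intro rat_unitsI[of "- p" q]) simp_all
qed

abbreviation rat_coset :: "'a::comm_ring_1 \<Rightarrow> 'a set" where
  "rat_coset \<equiv> hcoset ring_hyp rat_units"

abbreviation rat_quot :: "'a::comm_ring_1 set hyperring" where
  "rat_quot \<equiv> hquot ring_hyp rat_units"

lemma rat_coset_eq: "rat_coset x = {x * g | g. g \<in> rat_units}"
  by (simp add: hcoset_def)

lemma hcarrier_rat_quot: "hcarrier rat_quot = range rat_coset"
  by (simp add: hquot_def)

lemma hzero_rat_quot: "hzero rat_quot = rat_coset 0"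
  and hone_rat_quot: "hone rat_quot = rat_coset 1"
  by (simp_all add: hquot_def)

lemma hplus_rat_quot_unfold:
  "hplus rat_quot X Y = {rat_coset (x * t + y * s) | x y t s.
     X = rat_coset x \<and> Y = rat_coset y \<and> t \<in> rat_units \<and> s \<in> rat_units}"
  by (auto simp: hquot_def; blast)

locale rat_domain =
  fixes type :: "'a::idom itself"
  assumes of_nat_dvd_one: "\<And>n. n \<noteq> 0 \<Longrightarrow> (of_nat n :: 'a) dvd 1"
begin

lemma of_int_dvd_one:
  assumes "p \<noteq> 0"
  shows "(of_int p :: 'a) dvd 1"
proof (cases "p \<ge> 0")
  case True
  then show ?thesis
    using of_nat_dvd_one[of "nat p"] assms by simp
next
  case False
  then have "(of_int p :: 'a) = - of_nat (nat (- p))"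
    by simp
  then show ?thesis
    using of_nat_dvd_one[of "nat (- p)"] False by simp
qed

lemma rat_units_nonzero:
  assumes "(u :: 'a) \<in> rat_units"
  shows "u \<noteq> 0"
proof
  assume "u = 0"
  with assms obtain p :: int where "p \<noteq> 0" "of_int p = (0 :: 'a)"
    by (elim rat_unitsE) simp
  then show False
    using of_int_dvd_one[of p] by simp
qed

lemma rat_units_inverseE:
  assumes "(u :: 'a) \<in> rat_units"
  obtains u' where "u' \<in> rat_units" "u * u' = 1"
proof -
  obtain p q :: int where pq: "p \<noteq> 0" "q \<noteq> 0" "of_int q * u = (of_int p :: 'a)"
    using assms by (elim rat_unitsE)
  obtain w where w: "(of_int p :: 'a) * w = 1"
    using of_int_dvd_one[OF pq(1)] by (elim dvdE) simp
  have "of_int p * (of_int q * w) = (of_int q :: 'a)"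
    using w by (simp add: mult.left_commute)
  then have "of_int q * w \<in> rat_units"
    using pq by (intro rat_unitsI[of q p]) simp_all
  moreover have "u * (of_int q * w) = (of_int q * u) * w"
    by (simp only: ac_simps)
  ultimately show thesis
    using pq(3) w that by simp
qed

lemma rat_coset_mult_unit:
  assumes q: "q \<in> rat_units"
  shows "rat_coset (x * q) = rat_coset (x :: 'a)"
proof (intro equalityI subsetI)
  fix z assume "z \<in> rat_coset (x * q)"
  then obtain g where "g \<in> rat_units" "z = x * (q * g)"
    unfolding rat_coset_eq by (auto simp: mult.assoc)
  then show "z \<in> rat_coset x"
    unfolding rat_coset_eq using q rat_units_mult by blast
next
  fix z assume "z \<in> rat_coset x"
  then obtain g where g: "g \<in> rat_units" "z = x * g"
    unfolding rat_coset_eq by auto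
  obtain q' where q': "q' \<in> rat_units" "q * q' = 1"
    using rat_units_inverseE[OF q] .
  have "z = x * q * (q' * g)"
    using g(2) q'(2) by (simp add: mult.assoc flip: mult.assoc[of q q' g])
  then show "z \<in> rat_coset (x * q)"
    unfolding rat_coset_eq using g(1) q'(1) rat_units_mult by blast
qed

lemma rat_coset_eq_iff: "rat_coset x = rat_coset (y :: 'a) \<longleftrightarrow> (\<exists>q\<in>rat_units. y = x * q)"
proof
  assume "rat_coset x = rat_coset y"
  then have "y \<in> rat_coset x"
    unfolding rat_coset_eq using rat_units_one by force
  then show "\<exists>q\<in>rat_units. y = x * q"
    unfolding rat_coset_eq by auto
qed (auto simp: rat_coset_mult_unit)

lemma rat_coset_eq_zero_iff: "rat_coset x = rat_coset 0 \<longleftrightarrow> (x :: 'a) = 0"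
  using rat_coset_eq_iff[of x 0] rat_coset_eq_iff[of 0 x] rat_units_nonzero by auto

lemma htimes_rat_quot: "htimes rat_quot (rat_coset x) (rat_coset y) = rat_coset (x * y :: 'a)"
proof -
  have well_defined: "rat_coset (x' * y') = rat_coset (x * y)"
    if xy: "rat_coset x = rat_coset x'" "rat_coset y = rat_coset y'" for x' y'
  proof -
    obtain q q' where q: "q \<in> rat_units" "q' \<in> rat_units" and "x' = x * q" "y' = y * q'"
      using xy rat_coset_eq_iff by metis
    then have "x' * y' = x * y * (q * q')"
      by (simp add: ac_simps)
    then show ?thesis
      using rat_coset_mult_unit[OF rat_units_mult[OF q]] by simp
  qed
  have "htimes rat_quot (rat_coset x) (rat_coset y) = rat_coset (htimes ring_hyp x y)"
  proof (rule htimes_hquot_hcoset)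
    fix x' y' assume "rat_coset x = rat_coset x'" "rat_coset y = rat_coset y'"
    then show "rat_coset (htimes ring_hyp x' y') = rat_coset (htimes ring_hyp x y)"
      unfolding ring_hyp_simps by (rule well_defined)
  qed simp_all
  then show ?thesis
    by simp
qed

lemma hplus_rat_quot:
  "hplus rat_quot (rat_coset a) (rat_coset b) = {rat_coset (a * t + b * s :: 'a) | t s. t \<in> rat_units \<and> s \<in> rat_units}"
proof (intro equalityI subsetI)
  fix Z assume "Z \<in> hplus rat_quot (rat_coset a) (rat_coset b)"
  then obtain x y t s where xy: "rat_coset a = rat_coset x" "rat_coset b = rat_coset y"
    and ts: "t \<in> rat_units" "s \<in> rat_units" and Z: "Z = rat_coset (x * t + y * s)"
    unfolding hplus_rat_quot_unfold by blast
  obtain q q' where q: "q \<in> rat_units" "q' \<in> rat_units" and "x = a * q" "y = b * q'"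
    using xy rat_coset_eq_iff by metis
  then have "Z = rat_coset (a * (q * t) + b * (q' * s))"
    using Z by (simp add: algebra_simps)
  moreover have "q * t \<in> rat_units" "q' * s \<in> rat_units"
    using q ts rat_units_mult by blast+
  ultimately show "Z \<in> {rat_coset (a * t + b * s) | t s. t \<in> rat_units \<and> s \<in> rat_units}"
    by blast
next
  fix Z assume "Z \<in> {rat_coset (a * t + b * s) | t s. t \<in> rat_units \<and> s \<in> rat_units}"
  then show "Z \<in> hplus rat_quot (rat_coset a) (rat_coset b)"
    unfolding hplus_rat_quot_unfold by blast
qed

lemma hneg_rat_quot: "hneg rat_quot (rat_coset a) = rat_coset (a :: 'a)"
  unfolding hneg_def
proof (rule the_equality)
  have "rat_coset 0 = rat_coset (a * 1 + a * (- 1))"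
    by simp
  then show "rat_coset a \<in> hcarrier rat_quot \<and> hzero rat_quot \<in> hplus rat_quot (rat_coset a) (rat_coset a)"
    unfolding hcarrier_rat_quot hzero_rat_quot hplus_rat_quot
    using rat_units_one rat_units_uminus[OF rat_units_one] by blast
next
  fix Y assume "Y \<in> hcarrier rat_quot \<and> hzero rat_quot \<in> hplus rat_quot (rat_coset a) Y"
  then obtain b where Y: "Y = rat_coset b" "rat_coset 0 \<in> hplus rat_quot (rat_coset a) (rat_coset b)"
    unfolding hcarrier_rat_quot hzero_rat_quot by auto
  then obtain t s where b: "t \<in> rat_units" "s \<in> rat_units" "a * t + b * s = 0"
    unfolding hplus_rat_quot by (auto simp: rat_coset_eq_zero_iff[symmetric])
  obtain s' where s': "s' \<in> rat_units" "s * s' = 1"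
    using rat_units_inverseE[OF b(2)] .
  have "b = b * (s * s')"
    using s' by simp
  also have "\<dots> = (b * s) * s'"
    by (simp add: algebra_simps)
  also have "\<dots> = - (a * t) * s'"
    using b(3) by (simp add: add_eq_0_iff)
  also have "\<dots> = a * (- (t * s'))"
    by simp
  finally show "Y = rat_coset a"
    using Y(1) b(1) s'(1) rat_coset_eq_iff rat_units_mult rat_units_uminus by metis
qed

end

section \<open>The spectra of \<open>A\<close> and \<open>A/\<rat>\<^sup>\<times>\<close>\<close>

definition coset_preimage :: "'a::comm_ring_1 set set \<Rightarrow> 'a set" where
  "coset_preimage P = {a. rat_coset a \<in> P}"

definition coset_image :: "'a::comm_ring_1 set \<Rightarrow> 'a set set" where
  "coset_image p = rat_coset ` p"

lemma coset_image_preimage: "I \<subseteq> range rat_coset \<Longrightarrow> coset_image (coset_preimage I) = I"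
  unfolding coset_image_def coset_preimage_def by auto

context rat_domain
begin

lemma hplus_hneg_rat_quot:
  "hplus rat_quot (rat_coset a) (hneg rat_quot (htimes rat_quot (rat_coset r) (rat_coset b))) =
     {rat_coset (a * t + r * b * s :: 'a) | t s. t \<in> rat_units \<and> s \<in> rat_units}"
  by (simp add: htimes_rat_quot hneg_rat_quot hplus_rat_quot)

lemma hideal_rat_quot_iff:
  "hideal rat_quot I \<longleftrightarrow> I \<subseteq> range rat_coset \<and> I \<noteq> {} \<and>
     (\<forall>a b r t s. rat_coset a \<in> I \<longrightarrow> rat_coset b \<in> I \<longrightarrow> t \<in> rat_units \<longrightarrow> s \<in> rat_units \<longrightarrow>
        rat_coset (a * t + r * b * s :: 'a) \<in> I)"
proof
  assume "hideal rat_quot I"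
  then have I: "I \<subseteq> range rat_coset" "I \<noteq> {}"
    and step: "\<And>x y z :: 'a set. x \<in> I \<Longrightarrow> y \<in> I \<Longrightarrow> z \<in> range rat_coset \<Longrightarrow>
      hplus rat_quot x (hneg rat_quot (htimes rat_quot z y)) \<subseteq> I"
    unfolding hideal_def hcarrier_rat_quot by blast+
  have "rat_coset (a * t + r * b * s) \<in> I"
    if "rat_coset a \<in> I" "rat_coset b \<in> I" "t \<in> rat_units" "s \<in> rat_units" for a b r t s :: 'a
    using step[OF that(1,2) rangeI, of r] that(3,4) unfolding hplus_hneg_rat_quot by blast
  with I show "I \<subseteq> range rat_coset \<and> I \<noteq> {} \<and>
     (\<forall>a b r t s. rat_coset a \<in> I \<longrightarrow> rat_coset b \<in> I \<longrightarrow> t \<in> rat_units \<longrightarrow> s \<in> rat_units \<longrightarrow>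
        rat_coset (a * t + r * b * s) \<in> I)"
    by blast
next
  assume I: "I \<subseteq> range rat_coset \<and> I \<noteq> {} \<and>
     (\<forall>a b r t s. rat_coset a \<in> I \<longrightarrow> rat_coset b \<in> I \<longrightarrow> t \<in> rat_units \<longrightarrow> s \<in> rat_units \<longrightarrow>
        rat_coset (a * t + r * b * s :: 'a) \<in> I)"
  show "hideal rat_quot I"
    unfolding hideal_def hcarrier_rat_quot
  proof (intro conjI ballI)
    fix x y z :: "'a set" assume xy: "x \<in> I" "y \<in> I" and "z \<in> range rat_coset"
    moreover obtain a b where "x = rat_coset a" "y = rat_coset b"
      using I xy by blast
    ultimately show "hplus rat_quot x (hneg rat_quot (htimes rat_quot z y)) \<subseteq> I"
      using I by (auto simp: hplus_hneg_rat_quot)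
  qed (use I in auto)
qed

lemma hideal_coset_preimage:
  assumes "hideal rat_quot I"
  shows "hideal ring_hyp (coset_preimage I :: 'a set)"
  unfolding hideal_ring_hyp_iff
proof
  show "coset_preimage I \<noteq> {}"
    using assms unfolding hideal_rat_quot_iff coset_preimage_def by blast
  show "\<forall>a\<in>coset_preimage I. \<forall>b\<in>coset_preimage I. \<forall>r. a - r * b \<in> coset_preimage I"
  proof (intro ballI allI)
    fix a b r assume "a \<in> coset_preimage I" "b \<in> coset_preimage I"
    then have "rat_coset (a * 1 + r * b * (- 1)) \<in> I"
      using assms rat_units_one rat_units_uminus[OF rat_units_one]
      unfolding hideal_rat_quot_iff coset_preimage_def by blast
    then show "a - r * b \<in> coset_preimage I"
      unfolding coset_preimage_def by simp
  qed
qed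

lemma rat_coset_in_coset_image_iff:
  assumes "hideal ring_hyp J"
  shows "rat_coset a \<in> coset_image J \<longleftrightarrow> (a :: 'a) \<in> J"
proof
  assume "rat_coset a \<in> coset_image J"
  then obtain j q where "j \<in> J" "q \<in> rat_units" "a = j * q"
    unfolding coset_image_def using rat_coset_eq_iff by (metis imageE)
  then show "a \<in> J"
    using hideal_ring_hyp_mult_right[OF assms] by blast
qed (simp add: coset_image_def)

lemma coset_preimage_image: "hideal ring_hyp J \<Longrightarrow> coset_preimage (coset_image J) = (J :: 'a set)"
  unfolding coset_preimage_def using rat_coset_in_coset_image_iff by blast

lemma hideal_coset_image:
  assumes J: "hideal ring_hyp (J :: 'a set)"
  shows "hideal rat_quot (coset_image J)"
  unfolding hideal_rat_quot_iff
proof (intro conjI allI impI)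
  show "coset_image J \<subseteq> range rat_coset" "coset_image J \<noteq> {}"
    using J unfolding coset_image_def hideal_ring_hyp_iff by auto
  fix a b r t s :: 'a
  assume "rat_coset a \<in> coset_image J" "rat_coset b \<in> coset_image J" "t \<in> rat_units" "s \<in> rat_units"
  then have "a * t \<in> J" "r * b * s \<in> J"
    using rat_coset_in_coset_image_iff[OF J] hideal_ring_hyp_mult_left[OF J] hideal_ring_hyp_mult_right[OF J]
    by simp_all
  then show "rat_coset (a * t + r * b * s) \<in> coset_image J"
    using hideal_ring_hyp_add[OF J] unfolding coset_image_def by blast
qed

lemma coset_preimage_in_hSpec:
  assumes "P \<in> hSpec rat_quot"
  shows "coset_preimage P \<in> hSpec (ring_hyp :: 'a hyperring)"
proof -
  have P: "hideal rat_quot P" "P \<noteq> range rat_coset"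
    and prime: "\<And>a b :: 'a. htimes rat_quot (rat_coset a) (rat_coset b) \<in> P \<Longrightarrow> rat_coset a \<in> P \<or> rat_coset b \<in> P"
    using assms unfolding hSpec_def hprime_def hcarrier_rat_quot by auto
  have "coset_preimage P \<noteq> UNIV"
    using P coset_image_preimage[of P] unfolding hideal_rat_quot_iff coset_image_def by auto
  then show ?thesis
    using hideal_coset_preimage[OF P(1)] prime
    unfolding hSpec_def hprime_ring_hyp_iff by (auto simp: coset_preimage_def htimes_rat_quot)
qed

lemma coset_image_in_hSpec:
  assumes "p \<in> hSpec (ring_hyp :: 'a hyperring)"
  shows "coset_image p \<in> hSpec rat_quot"
proof -
  have p: "hideal ring_hyp p" "p \<noteq> UNIV" "\<And>a b. a * b \<in> p \<Longrightarrow> a \<in> p \<or> b \<in> p"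
    using assms unfolding hSpec_def hprime_ring_hyp_iff by auto
  have "coset_image p \<noteq> range rat_coset"
    using p(2) coset_preimage_image[OF p(1)] unfolding coset_preimage_def by auto
  moreover have "X \<in> coset_image p \<or> Y \<in> coset_image p"
    if XY: "X \<in> range rat_coset" "Y \<in> range rat_coset" "htimes rat_quot X Y \<in> coset_image p" for X Y
  proof -
    obtain x y where xy: "X = rat_coset x" "Y = rat_coset y"
      using XY(1,2) by blast
    then have "x * y \<in> p"
      using XY(3) rat_coset_in_coset_image_iff[OF p(1)] by (simp add: htimes_rat_quot)
    then show ?thesis
      using xy p(3) rat_coset_in_coset_image_iff[OF p(1)] by blast
  qed
  ultimately show ?thesis
    using hideal_coset_image[OF p(1)] unfolding hSpec_def hprime_def hcarrier_rat_quot by blast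
qed

lemma hSpec_rat_quot: "hSpec rat_quot = coset_image ` hSpec (ring_hyp :: 'a hyperring)"
proof (intro equalityI subsetI)
  fix P :: "'a set set" assume P: "P \<in> hSpec rat_quot"
  then have "P = coset_image (coset_preimage P)"
    using coset_image_preimage[of P] unfolding hSpec_def hprime_def hideal_def hcarrier_rat_quot by simp
  then show "P \<in> coset_image ` hSpec ring_hyp"
    using coset_preimage_in_hSpec[OF P] by blast
qed (auto intro: coset_image_in_hSpec)

lemma coset_preimage_image_hSpec: "p \<in> hSpec ring_hyp \<Longrightarrow> coset_preimage (coset_image p) = (p :: 'a set)"
  using coset_preimage_image hSpec_ring_hyp_hideal by blast

lemma inj_on_coset_image_hSpec: "inj_on coset_image (hSpec (ring_hyp :: 'a hyperring))"
  by (metis coset_preimage_image_hSpec inj_onI)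

lemma bij_betw_coset_preimage_hSpec:
  "bij_betw coset_preimage (hSpec rat_quot) (hSpec (ring_hyp :: 'a hyperring))"
  by (rule bij_betw_byWitness[where f' = coset_image])
    (auto simp: hSpec_rat_quot coset_preimage_image_hSpec intro: coset_image_in_hSpec)

lemma coset_image_subset_iff:
  assumes "hideal ring_hyp (J :: 'a set)" "hideal ring_hyp p"
  shows "coset_image J \<subseteq> coset_image p \<longleftrightarrow> J \<subseteq> p"
proof
  assume sub: "coset_image J \<subseteq> coset_image p"
  show "J \<subseteq> p"
  proof
    fix a assume "a \<in> J"
    then have "rat_coset a \<in> coset_image p"
      using sub unfolding coset_image_def by blast
    then show "a \<in> p"
      using rat_coset_in_coset_image_iff[OF assms(2)] by blast
  qed
qed (auto simp: coset_image_def)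

lemma hV_rat_quot:
  assumes J: "hideal ring_hyp (J :: 'a set)"
  shows "hV rat_quot (coset_image J) = coset_image ` hV ring_hyp J"
proof -
  have "{P \<in> coset_image ` hSpec ring_hyp. coset_image J \<subseteq> P} = coset_image ` {p \<in> hSpec ring_hyp. J \<subseteq> p}"
    using coset_image_subset_iff[OF J hSpec_ring_hyp_hideal] by auto
  then show ?thesis
    unfolding hV_def hSpec_rat_quot .
qed

lemma zopen_rat_quot_iff: "zopen rat_quot W \<longleftrightarrow> (\<exists>U. zopen (ring_hyp :: 'a hyperring) U \<and> W = coset_image ` U)"
proof -
  have open_image: "coset_image ` (hSpec ring_hyp - hV ring_hyp J) = hSpec rat_quot - hV rat_quot (coset_image J)"
    if "hideal ring_hyp (J :: 'a set)" for J
    unfolding hV_rat_quot[OF that] hSpec_rat_quot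
    by (rule inj_on_image_set_diff[OF inj_on_coset_image_hSpec]) (auto simp: hV_def)
  show ?thesis
  proof
    assume "zopen rat_quot W"
    then obtain I where I: "hideal rat_quot I" "W = hSpec rat_quot - hV rat_quot I"
      unfolding zopen_def by blast
    then have "W = coset_image ` (hSpec ring_hyp - hV ring_hyp (coset_preimage I))"
      using open_image[OF hideal_coset_preimage[OF I(1)]] coset_image_preimage[of I]
      unfolding hideal_rat_quot_iff by simp
    then show "\<exists>U. zopen ring_hyp U \<and> W = coset_image ` U"
      using hideal_coset_preimage[OF I(1)] unfolding zopen_def by blast
  next
    assume "\<exists>U. zopen ring_hyp U \<and> W = coset_image ` U"
    then show "zopen rat_quot W"
      unfolding zopen_def using open_image hideal_coset_image by metis
  qed
qed

end

section \<open>Localizations of \<open>A/\<rat>\<^sup>\<times>\<close> as fractions modulo \<open>\<rat>\<^sup>\<times>\<close>\<close>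

definition rat_fracs :: "'a::idom fract set" where
  "rat_fracs = (\<lambda>q. Fract q 1) ` rat_units"

definition rat_combinations :: "'a::idom fract \<Rightarrow> 'a fract \<Rightarrow> 'a fract set" where
  "rat_combinations v w = {c1 * v + c2 * w | c1 c2. c1 \<in> rat_fracs \<and> c2 \<in> rat_fracs}"

text \<open>The element of the localization of \<open>A/\<rat>\<^sup>\<times>\<close> at \<open>coset_image p\<close> that corresponds to the
  class of \<open>v \<in> Frac A\<close> modulo \<open>\<rat>\<^sup>\<times>\<close>.\<close>

definition quot_frac_class :: "'a::idom set \<Rightarrow> 'a fract \<Rightarrow> ('a set \<times> 'a set) set" where
  "quot_frac_class p v = {(rat_coset a, rat_coset f) | a f. f \<notin> p \<and> (\<exists>c\<in>rat_fracs. Fract a f = c * v)}"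

lemma quot_frac_classI:
  "f \<notin> p \<Longrightarrow> c \<in> rat_fracs \<Longrightarrow> Fract a f = c * v \<Longrightarrow> (rat_coset a, rat_coset f) \<in> quot_frac_class p v"
  unfolding quot_frac_class_def by blast

lemma quot_frac_classE:
  assumes "z \<in> quot_frac_class p v"
  obtains a f c where "z = (rat_coset a, rat_coset f)" "f \<notin> p" "c \<in> rat_fracs" "Fract a f = c * v"
  using assms unfolding quot_frac_class_def by blast

lemma regular_at_rat_fracs_mult:
  assumes "regular_at p v" "c \<in> rat_fracs"
  shows "regular_at p (c * v)"
proof -
  obtain a f q where "f \<notin> p" "v = Fract a f" "c = Fract q 1"
    using assms unfolding regular_at_def rat_fracs_def by auto
  then have "f \<notin> p" "c * v = Fract (q * a) f"
    by auto
  then show ?thesis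
    unfolding regular_at_def by blast
qed

context rat_domain
begin

lemma rat_fracs_one: "(1 :: 'a fract) \<in> rat_fracs"
  unfolding rat_fracs_def using rat_units_one by (metis One_fract_def image_eqI)

lemma rat_fracs_Fract: "q \<in> rat_units \<Longrightarrow> Fract (q :: 'a) 1 \<in> rat_fracs"
  unfolding rat_fracs_def by blast

lemma rat_fracs_mult:
  assumes "(c :: 'a fract) \<in> rat_fracs" "d \<in> rat_fracs"
  shows "c * d \<in> rat_fracs"
proof -
  obtain q r where "q \<in> rat_units" "r \<in> rat_units" "c = Fract q 1" "d = Fract r 1"
    using assms unfolding rat_fracs_def by auto
  then have "c * d = Fract (q * r) 1" "q * r \<in> rat_units"
    using rat_units_mult by auto
  then show ?thesis
    unfolding rat_fracs_def by blast
qed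

lemma rat_fracs_nonzero: "(c :: 'a fract) \<in> rat_fracs \<Longrightarrow> c \<noteq> 0"
  unfolding rat_fracs_def using rat_units_nonzero by (auto simp: Zero_fract_def eq_fract)

lemma rat_fracs_inverse:
  assumes "(c :: 'a fract) \<in> rat_fracs"
  shows "inverse c \<in> rat_fracs"
proof -
  obtain q where q: "q \<in> rat_units" "c = Fract q 1"
    using assms unfolding rat_fracs_def by auto
  obtain q' where q': "q' \<in> rat_units" "q * q' = 1"
    using rat_units_inverseE[OF q(1)] .
  have "inverse c = Fract q' 1"
    using q q' rat_units_nonzero[OF q(1)] by (simp add: eq_fract mult.commute)
  then show ?thesis
    unfolding rat_fracs_def using q'(1) by auto
qed

lemma quot_frac_class_rat_fracs_mult:
  assumes "(c :: 'a fract) \<in> rat_fracs"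
  shows "quot_frac_class p (c * v) = quot_frac_class p v"
proof -
  have sub: "quot_frac_class p (d * w) \<subseteq> quot_frac_class p w" if "d \<in> rat_fracs" for d w :: "'a fract"
    unfolding quot_frac_class_def using rat_fracs_mult[OF _ that] by (force simp: mult.assoc)
  have "v = inverse c * (c * v)"
    using rat_fracs_nonzero[OF assms] by (simp add: mult.assoc[symmetric])
  then have "quot_frac_class p v \<subseteq> quot_frac_class p (c * v)"
    using sub[OF rat_fracs_inverse[OF assms]] by metis
  then show ?thesis
    using sub[OF assms] by blast
qed

lemma hcarrier_rat_quot_minus:
  assumes "hideal ring_hyp (p :: 'a set)"
  shows "hcarrier rat_quot - coset_image p = rat_coset ` (UNIV - p)"
  using rat_coset_in_coset_image_iff[OF assms] unfolding hcarrier_rat_quot by auto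

context
  fixes p :: "'a set"
  assumes p: "p \<in> hSpec ring_hyp"
begin

lemma hfrac_rat_quot_cosets:
  assumes f: "f \<notin> p"
  shows "hfrac rat_quot (hcarrier rat_quot - coset_image p) (rat_coset a) (rat_coset f) =
    {(rat_coset a', rat_coset f') | a' f'. f' \<notin> p \<and> (\<exists>q\<in>rat_units. a' * f = q * a * f')}"
proof (intro equalityI subsetI)
  note minus = hcarrier_rat_quot_minus[OF hSpec_ring_hyp_hideal[OF p]]
  fix z assume "z \<in> hfrac rat_quot (hcarrier rat_quot - coset_image p) (rat_coset a) (rat_coset f)"
  then obtain r' t' y where "z = (r', t')" "r' \<in> hcarrier rat_quot"
    "t' \<in> rat_coset ` (UNIV - p)" "y \<in> rat_coset ` (UNIV - p)"
    and eq: "htimes rat_quot y (htimes rat_quot (rat_coset a) t') = htimes rat_quot y (htimes rat_quot r' (rat_coset f))"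
    unfolding hfrac_def minus by blast
  then obtain a' f' x where z: "z = (rat_coset a', rat_coset f')" "f' \<notin> p" "x \<notin> p"
    and "r' = rat_coset a'" "t' = rat_coset f'" "y = rat_coset x"
    unfolding hcarrier_rat_quot by blast
  with eq have "rat_coset (x * (a * f')) = rat_coset (x * (a' * f))"
    by (simp add: htimes_rat_quot)
  then obtain q where q: "q \<in> rat_units" "x * (a' * f) = x * (a * f') * q"
    unfolding rat_coset_eq_iff by blast
  then have "x * (a' * f) = x * (q * a * f')"
    by (simp add: ac_simps)
  then have "a' * f = q * a * f'"
    using hSpec_ring_hyp_nonzero[OF p z(3)] by simp
  then show "z \<in> {(rat_coset a', rat_coset f') | a' f'. f' \<notin> p \<and> (\<exists>q\<in>rat_units. a' * f = q * a * f')}"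
    using z q(1) by blast
next
  note minus = hcarrier_rat_quot_minus[OF hSpec_ring_hyp_hideal[OF p]]
  fix z assume "z \<in> {(rat_coset a', rat_coset f') | a' f'. f' \<notin> p \<and> (\<exists>q\<in>rat_units. a' * f = q * a * f')}"
  then obtain a' f' q where z: "z = (rat_coset a', rat_coset f')" "f' \<notin> p" and q: "q \<in> rat_units" "a' * f = q * a * f'"
    by blast
  have "rat_coset (1 * (a * f')) = rat_coset (1 * (a' * f))"
    unfolding rat_coset_eq_iff using q by (auto simp: ac_simps)
  then have "htimes rat_quot (rat_coset 1) (htimes rat_quot (rat_coset a) (rat_coset f')) =
      htimes rat_quot (rat_coset 1) (htimes rat_quot (rat_coset a') (rat_coset f))"
    by (simp add: htimes_rat_quot)
  moreover have "rat_coset 1 \<in> rat_coset ` (UNIV - p)"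
    using hSpec_ring_hyp_one[OF p] by blast
  ultimately have "\<exists>y\<in>rat_coset ` (UNIV - p). htimes rat_quot y (htimes rat_quot (rat_coset a) (rat_coset f')) =
      htimes rat_quot y (htimes rat_quot (rat_coset a') (rat_coset f))"
    by blast
  moreover have "rat_coset f' \<in> rat_coset ` (UNIV - p)"
    using z(2) by blast
  ultimately show "z \<in> hfrac rat_quot (hcarrier rat_quot - coset_image p) (rat_coset a) (rat_coset f)"
    unfolding hfrac_def minus z(1) by (simp add: hcarrier_rat_quot)
qed

lemma quot_frac_class_Fract:
  assumes f: "f \<notin> p"
  shows "quot_frac_class p (Fract a f) =
    {(rat_coset a', rat_coset f') | a' f'. f' \<notin> p \<and> (\<exists>q\<in>rat_units. a' * f = q * a * f')}"
proof -
  have "Fract a' f' = Fract q 1 * Fract a f \<longleftrightarrow> a' * f = q * a * f'" if "f' \<notin> p" for a' f' q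
    using that f hSpec_ring_hyp_nonzero[OF p] by (simp add: eq_fract ac_simps)
  then show ?thesis
    unfolding quot_frac_class_def rat_fracs_def by blast
qed

lemma hfrac_rat_quot:
  "f \<notin> p \<Longrightarrow> hfrac rat_quot (hcarrier rat_quot - coset_image p) (rat_coset a) (rat_coset f) =
    quot_frac_class p (Fract a f)"
  using hfrac_rat_quot_cosets quot_frac_class_Fract by simp

lemma quot_frac_class_eqE:
  assumes v: "regular_at p v" and eq: "quot_frac_class p v = quot_frac_class p w"
  obtains c where "c \<in> rat_fracs" "w = c * v"
proof -
  obtain a f where af: "f \<notin> p" "v = Fract a f"
    using v unfolding regular_at_def by blast
  have "(rat_coset a, rat_coset f) \<in> quot_frac_class p w"
    unfolding eq[symmetric] by (rule quot_frac_classI[OF af(1) rat_fracs_one]) (simp add: af(2))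
  then obtain a' f' c where "rat_coset a = rat_coset a'" "rat_coset f = rat_coset f'"
    and c: "c \<in> rat_fracs" "Fract a' f' = c * w"
    by (elim quot_frac_classE) simp
  then obtain q1 q2 where q: "q1 \<in> rat_units" "q2 \<in> rat_units" "a' = a * q1" "f' = f * q2"
    unfolding rat_coset_eq_iff by blast
  define d where "d = Fract q1 1 * inverse (Fract q2 1)"
  have d: "d \<in> rat_fracs"
    unfolding d_def by (intro rat_fracs_mult rat_fracs_inverse rat_fracs_Fract q(1,2))
  have cw: "c * w = d * v"
    unfolding c(2)[symmetric] q(3,4) d_def af(2) by (simp add: ac_simps)
  have "w = inverse c * (c * w)"
    using rat_fracs_nonzero[OF c(1)] by (simp add: mult.assoc[symmetric])
  also have "\<dots> = (inverse c * d) * v"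
    unfolding cw by (simp add: mult.assoc)
  finally show thesis
    by (rule that[OF rat_fracs_mult[OF rat_fracs_inverse[OF c(1)] d]])
qed

lemma hloc_rat_quot: "hloc rat_quot (coset_image p) = quot_frac_class p ` Collect (regular_at p)"
proof (intro equalityI subsetI)
  note minus = hcarrier_rat_quot_minus[OF hSpec_ring_hyp_hideal[OF p]]
  fix u assume "u \<in> hloc rat_quot (coset_image p)"
  then obtain r t where r: "r \<in> hcarrier rat_quot" and t: "t \<in> hcarrier rat_quot - coset_image p"
    and u: "u = hfrac rat_quot (hcarrier rat_quot - coset_image p) r t"
    unfolding hloc_def by blast
  obtain a where "r = rat_coset a"
    using r unfolding hcarrier_rat_quot by blast
  moreover obtain f where "f \<notin> p" "t = rat_coset f"
    using t unfolding minus by blast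
  ultimately have "u = quot_frac_class p (Fract a f)" "regular_at p (Fract a f)"
    using u hfrac_rat_quot unfolding regular_at_def by auto
  then show "u \<in> quot_frac_class p ` Collect (regular_at p)"
    by blast
next
  note minus = hcarrier_rat_quot_minus[OF hSpec_ring_hyp_hideal[OF p]]
  fix u assume "u \<in> quot_frac_class p ` Collect (regular_at p)"
  then obtain a f where "f \<notin> p" "u = quot_frac_class p (Fract a f)"
    unfolding regular_at_def by blast
  moreover from this have "u = hfrac rat_quot (hcarrier rat_quot - coset_image p) (rat_coset a) (rat_coset f)"
    using hfrac_rat_quot by simp
  moreover have "rat_coset a \<in> hcarrier rat_quot"
    by (simp add: hcarrier_rat_quot)
  moreover from calculation have "rat_coset f \<in> hcarrier rat_quot - coset_image p"
    unfolding minus by blast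
  ultimately show "u \<in> hloc rat_quot (coset_image p)"
    unfolding hloc_def by blast
qed

lemma quot_frac_class_eq_hfracE:
  assumes v: "regular_at p v" and r: "r \<in> hcarrier rat_quot" and t: "t \<in> hcarrier rat_quot - coset_image p"
    and eq: "quot_frac_class p v = hfrac rat_quot (hcarrier rat_quot - coset_image p) r t"
  obtains a f c where "r = rat_coset a" "t = rat_coset f" "f \<notin> p" "c \<in> rat_fracs" "Fract a f = c * v"
proof -
  obtain a where a: "r = rat_coset a"
    using r unfolding hcarrier_rat_quot by blast
  obtain f where f: "f \<notin> p" "t = rat_coset f"
    using t unfolding hcarrier_rat_quot_minus[OF hSpec_ring_hyp_hideal[OF p]] by blast
  have "quot_frac_class p v = quot_frac_class p (Fract a f)"
    using eq hfrac_rat_quot[OF f(1)] a f(2) by simp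
  then obtain c where "c \<in> rat_fracs" "Fract a f = c * v"
    by (rule quot_frac_class_eqE[OF v])
  then show thesis
    by (rule that[OF a f(2) f(1)])
qed

lemma regular_at_hfrac_rat_quotE:
  assumes "regular_at p v"
  obtains a f where "f \<notin> p" "v = Fract a f" "rat_coset a \<in> hcarrier rat_quot"
    "rat_coset f \<in> hcarrier rat_quot - coset_image p"
    "quot_frac_class p v = hfrac rat_quot (hcarrier rat_quot - coset_image p) (rat_coset a) (rat_coset f)"
proof -
  obtain a f where "f \<notin> p" "v = Fract a f"
    using assms unfolding regular_at_def by blast
  moreover from this have "rat_coset f \<in> hcarrier rat_quot - coset_image p"
    unfolding hcarrier_rat_quot_minus[OF hSpec_ring_hyp_hideal[OF p]] by blast
  ultimately show thesis
    using that hfrac_rat_quot by (simp add: hcarrier_rat_quot)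
qed

lemma loc_times_rat_quot:
  assumes v: "regular_at p v" and w: "regular_at p w"
  shows "loc_times rat_quot (coset_image p) (quot_frac_class p v) (quot_frac_class p w) = quot_frac_class p (v * w)"
proof -
  obtain a f where af: "rat_coset a \<in> hcarrier rat_quot" "rat_coset f \<in> hcarrier rat_quot - coset_image p"
    "quot_frac_class p v = hfrac rat_quot (hcarrier rat_quot - coset_image p) (rat_coset a) (rat_coset f)"
    using regular_at_hfrac_rat_quotE[OF v] by metis
  obtain b g where bg: "rat_coset b \<in> hcarrier rat_quot" "rat_coset g \<in> hcarrier rat_quot - coset_image p"
    "quot_frac_class p w = hfrac rat_quot (hcarrier rat_quot - coset_image p) (rat_coset b) (rat_coset g)"
    using regular_at_hfrac_rat_quotE[OF w] by metis
  have "hfrac rat_quot (hcarrier rat_quot - coset_image p) (htimes rat_quot a' b') (htimes rat_quot f' g') =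
      quot_frac_class p (v * w)"
    if h: "a' \<in> hcarrier rat_quot" "b' \<in> hcarrier rat_quot"
      "f' \<in> hcarrier rat_quot - coset_image p" "g' \<in> hcarrier rat_quot - coset_image p"
      "quot_frac_class p v = hfrac rat_quot (hcarrier rat_quot - coset_image p) a' f'"
      "quot_frac_class p w = hfrac rat_quot (hcarrier rat_quot - coset_image p) b' g'" for a' b' f' g'
  proof -
    obtain a1 f1 c1 where 1: "a' = rat_coset a1" "f' = rat_coset f1" "f1 \<notin> p" "c1 \<in> rat_fracs" "Fract a1 f1 = c1 * v"
      using quot_frac_class_eq_hfracE[OF v h(1,3,5)] .
    obtain a2 f2 c2 where 2: "b' = rat_coset a2" "g' = rat_coset f2" "f2 \<notin> p" "c2 \<in> rat_fracs" "Fract a2 f2 = c2 * w"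
      using quot_frac_class_eq_hfracE[OF w h(2,4,6)] .
    have "Fract (a1 * a2) (f1 * f2) = (c1 * c2) * (v * w)"
      using 1(5) 2(5) by (simp flip: mult_fract add: ac_simps)
    moreover have "hfrac rat_quot (hcarrier rat_quot - coset_image p) (htimes rat_quot a' b') (htimes rat_quot f' g') =
        quot_frac_class p (Fract (a1 * a2) (f1 * f2))"
      unfolding 1(1,2) 2(1,2) htimes_rat_quot using hfrac_rat_quot hSpec_ring_hyp_mult[OF p 1(3) 2(3)] by simp
    ultimately show ?thesis
      using quot_frac_class_rat_fracs_mult[OF rat_fracs_mult[OF 1(4) 2(4)]] by simp
  qed
  then show ?thesis
    by (rule loc_times_eqI[OF af(1) bg(1) af(2) bg(2) af(3) bg(3)])
qed

lemma hfrac_rat_quot_combination: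
  assumes "f1 \<notin> p" "f2 \<notin> p"
  shows "hfrac rat_quot (hcarrier rat_quot - coset_image p) (rat_coset (a1 * f2 * t + f1 * a2 * s))
      (htimes rat_quot (rat_coset f1) (rat_coset f2)) =
    quot_frac_class p (Fract t 1 * Fract a1 f1 + Fract s 1 * Fract a2 f2)"
proof -
  have "Fract t 1 * Fract a1 f1 + Fract s 1 * Fract a2 f2 = Fract (a1 * f2 * t + f1 * a2 * s) (f1 * f2)"
    using hSpec_ring_hyp_nonzero[OF p assms(1)] hSpec_ring_hyp_nonzero[OF p assms(2)] by (simp add: ac_simps)
  then show ?thesis
    unfolding htimes_rat_quot using hfrac_rat_quot hSpec_ring_hyp_mult[OF p assms] by simp
qed

lemma loc_plus_rat_quot:
  assumes v: "regular_at p v" and w: "regular_at p w"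
  shows "loc_plus rat_quot (coset_image p) (quot_frac_class p v) (quot_frac_class p w) =
    quot_frac_class p ` rat_combinations v w"
proof (intro equalityI subsetI)
  let ?X = "hcarrier rat_quot - coset_image p"
  fix x assume "x \<in> loc_plus rat_quot (coset_image p) (quot_frac_class p v) (quot_frac_class p w)"
  then obtain y r1 t1 r2 t2 where r: "r1 \<in> hcarrier rat_quot" "r2 \<in> hcarrier rat_quot" "t1 \<in> ?X" "t2 \<in> ?X"
    and vw: "quot_frac_class p v = hfrac rat_quot ?X r1 t1" "quot_frac_class p w = hfrac rat_quot ?X r2 t2"
    and x: "x = hfrac rat_quot ?X y (htimes rat_quot t1 t2)"
    and y: "y \<in> hplus rat_quot (htimes rat_quot r1 t2) (htimes rat_quot t1 r2)"
    unfolding loc_plus_def by blast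
  obtain a1 f1 c1 where 1: "r1 = rat_coset a1" "t1 = rat_coset f1" "f1 \<notin> p" "c1 \<in> rat_fracs" "Fract a1 f1 = c1 * v"
    using quot_frac_class_eq_hfracE[OF v r(1,3) vw(1)] .
  obtain a2 f2 c2 where 2: "r2 = rat_coset a2" "t2 = rat_coset f2" "f2 \<notin> p" "c2 \<in> rat_fracs" "Fract a2 f2 = c2 * w"
    using quot_frac_class_eq_hfracE[OF w r(2,4) vw(2)] .
  obtain t s where ts: "t \<in> rat_units" "s \<in> rat_units" "y = rat_coset (a1 * f2 * t + f1 * a2 * s)"
    using y unfolding 1(1,2) 2(1,2) htimes_rat_quot hplus_rat_quot by blast
  have "x = quot_frac_class p ((Fract t 1 * c1) * v + (Fract s 1 * c2) * w)"
    unfolding x ts(3) 1(2) 2(2) hfrac_rat_quot_combination[OF 1(3) 2(3)] 1(5) 2(5) by (simp add: ac_simps)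
  then show "x \<in> quot_frac_class p ` rat_combinations v w"
    unfolding rat_combinations_def
    using rat_fracs_mult[OF rat_fracs_Fract 1(4)] rat_fracs_mult[OF rat_fracs_Fract 2(4)] ts(1,2) by blast
next
  let ?X = "hcarrier rat_quot - coset_image p"
  fix x assume "x \<in> quot_frac_class p ` rat_combinations v w"
  then obtain t s where ts: "t \<in> rat_units" "s \<in> rat_units"
    and x: "x = quot_frac_class p (Fract t 1 * v + Fract s 1 * w)"
    unfolding rat_combinations_def rat_fracs_def by blast
  obtain a1 f1 where 1: "f1 \<notin> p" "v = Fract a1 f1" "rat_coset a1 \<in> hcarrier rat_quot" "rat_coset f1 \<in> ?X"
    "quot_frac_class p v = hfrac rat_quot ?X (rat_coset a1) (rat_coset f1)"
    using regular_at_hfrac_rat_quotE[OF v] .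
  obtain a2 f2 where 2: "f2 \<notin> p" "w = Fract a2 f2" "rat_coset a2 \<in> hcarrier rat_quot" "rat_coset f2 \<in> ?X"
    "quot_frac_class p w = hfrac rat_quot ?X (rat_coset a2) (rat_coset f2)"
    using regular_at_hfrac_rat_quotE[OF w] .
  have "x = hfrac rat_quot ?X (rat_coset (a1 * f2 * t + f1 * a2 * s)) (htimes rat_quot (rat_coset f1) (rat_coset f2))"
    unfolding x hfrac_rat_quot_combination[OF 1(1) 2(1)] 1(2) 2(2) ..
  moreover have "rat_coset (a1 * f2 * t + f1 * a2 * s) \<in>
      hplus rat_quot (htimes rat_quot (rat_coset a1) (rat_coset f2)) (htimes rat_quot (rat_coset f1) (rat_coset a2))"
    unfolding htimes_rat_quot hplus_rat_quot using ts(1,2) by blast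
  ultimately show "x \<in> loc_plus rat_quot (coset_image p) (quot_frac_class p v) (quot_frac_class p w)"
    unfolding loc_plus_def using 1(3-5) 2(3-5) by blast
qed

end

end

section \<open>Sections of the structure sheaf of \<open>A/\<rat>\<^sup>\<times>\<close>\<close>

definition quot_frac_section :: "'a::idom set set \<Rightarrow> 'a fract \<Rightarrow> 'a set set \<Rightarrow> ('a set \<times> 'a set) set" where
  "quot_frac_section U v =
     (\<lambda>P. if P \<in> coset_image ` U then quot_frac_class (coset_preimage P) v else undefined)"

lemma regular_on_rat_fracs_mult: "regular_on U v \<Longrightarrow> c \<in> rat_fracs \<Longrightarrow> regular_on U (c * v)"
  unfolding regular_on_def using regular_at_rat_fracs_mult by blast

lemma regular_on_rat_fracs: "U \<subseteq> hSpec ring_hyp \<Longrightarrow> c \<in> rat_fracs \<Longrightarrow> regular_on U c"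
  unfolding rat_fracs_def using regular_on_Fract_one by blast

context rat_domain
begin

lemma regular_on_rat_combinations:
  assumes "U \<subseteq> hSpec ring_hyp" "regular_on U v" "regular_on U (w :: 'a fract)"
  shows "rat_combinations v w \<subseteq> Collect (regular_on U)"
  using assms regular_on_add regular_on_rat_fracs_mult unfolding rat_combinations_def by blast

lemma coset_image_in_image_iff:
  assumes "U \<subseteq> hSpec ring_hyp" "p \<in> hSpec (ring_hyp :: 'a hyperring)"
  shows "coset_image p \<in> coset_image ` U \<longleftrightarrow> p \<in> U"
  using assms inj_on_coset_image_hSpec by (auto dest: inj_onD)

context
  fixes U :: "'a set set"
  assumes U: "U \<subseteq> hSpec ring_hyp"
begin

lemma quot_frac_section_coset_image: "p \<in> U \<Longrightarrow> quot_frac_section U v (coset_image p) = quot_frac_class p v"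
  unfolding quot_frac_section_def using U coset_preimage_image_hSpec by auto

lemma quot_frac_section_rat_fracs_mult:
  assumes "c \<in> rat_fracs"
  shows "quot_frac_section U (c * v) = quot_frac_section U v"
  unfolding quot_frac_section_def quot_frac_class_rat_fracs_mult[OF assms] ..

lemma quot_frac_section_eq_iff:
  assumes p: "p \<in> U" and v: "regular_on U v"
  shows "quot_frac_section U v = quot_frac_section U w \<longleftrightarrow> (\<exists>c\<in>rat_fracs. w = c * v)"
proof
  assume "quot_frac_section U v = quot_frac_section U w"
  then have "quot_frac_class p v = quot_frac_class p w"
    using fun_cong[of _ _ "coset_image p"] quot_frac_section_coset_image[OF p] by metis
  moreover have "p \<in> hSpec ring_hyp" "regular_at p v"
    using p v U unfolding regular_on_def by auto
  ultimately show "\<exists>c\<in>rat_fracs. w = c * v"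
    using quot_frac_class_eqE by metis
qed (auto simp: quot_frac_section_rat_fracs_mult)

lemma const_sec_rat_quot: "const_sec rat_quot (coset_image ` U) (rat_coset a) = quot_frac_section U (Fract a 1)"
proof
  fix P show "const_sec rat_quot (coset_image ` U) (rat_coset a) P = quot_frac_section U (Fract a 1) P"
  proof (cases "P \<in> coset_image ` U")
    case True
    then obtain p where p: "p \<in> U" "P = coset_image p"
      by blast
    then show ?thesis
      using U hfrac_rat_quot[of p 1 a] hSpec_ring_hyp_one[of p] quot_frac_section_coset_image
      unfolding const_sec_def by (auto simp: hone_rat_quot)
  qed (simp add: const_sec_def quot_frac_section_def)
qed

lemma htimes_hsheaf_rat_quot:
  assumes "regular_on U v" "regular_on U w"
  shows "htimes (hsheaf rat_quot (coset_image ` U)) (quot_frac_section U v) (quot_frac_section U w) =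
    quot_frac_section U (v * w)"
proof
  fix P
  show "htimes (hsheaf rat_quot (coset_image ` U)) (quot_frac_section U v) (quot_frac_section U w) P =
      quot_frac_section U (v * w) P"
  proof (cases "P \<in> coset_image ` U")
    case True
    then obtain p where p: "p \<in> U" "P = coset_image p"
      by blast
    then have "regular_at p v" "regular_at p w" "p \<in> hSpec ring_hyp"
      using assms U unfolding regular_on_def by auto
    then show ?thesis
      using True p loc_times_rat_quot quot_frac_section_coset_image by (simp add: hsheaf_def)
  qed (simp add: hsheaf_def quot_frac_section_def)
qed

end

lemma quot_frac_section_in_hsections:
  assumes U: "zopen ring_hyp (U :: 'a set set)" and v: "regular_on U v"
  shows "quot_frac_section U v \<in> hsections rat_quot (coset_image ` U)"
  unfolding hsections_def
proof (intro CollectI conjI allI impI ballI)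
  fix P assume "P \<notin> coset_image ` U"
  then show "quot_frac_section U v P = undefined"
    by (simp add: quot_frac_section_def)
next
  fix P assume "P \<in> coset_image ` U"
  then obtain p where p: "p \<in> U" "P = coset_image p"
    by blast
  then have "p \<in> hSpec ring_hyp" "regular_at p v"
    using v zopen_subset_hSpec[OF U] unfolding regular_on_def by auto
  then show "quot_frac_section U v P \<in> hloc rat_quot P"
    using p quot_frac_section_coset_image[OF zopen_subset_hSpec[OF U]] by (simp add: hloc_rat_quot)
next
  fix P assume "P \<in> coset_image ` U"
  then obtain p where p: "p \<in> U" "P = coset_image p"
    by blast
  then obtain a f where af: "f \<notin> p" "v = Fract a f"
    using v unfolding regular_on_def regular_at_def by blast
  define U' where "U' = U \<inter> {q \<in> hSpec ring_hyp. f \<notin> q}"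
  have "U' \<subseteq> U" "U' \<subseteq> hSpec ring_hyp"
    unfolding U'_def by auto
  have "zopen rat_quot (coset_image ` U')"
    unfolding zopen_rat_quot_iff U'_def using zopen_ring_hyp_Int[OF U zopen_ring_hyp_basic] by blast
  moreover have "P \<in> coset_image ` U'" "coset_image ` U' \<subseteq> coset_image ` U"
    using p af zopen_subset_hSpec[OF U] unfolding U'_def by auto
  moreover have "rat_coset f \<notin> Q \<and>
      quot_frac_section U v Q = hfrac rat_quot (hcarrier rat_quot - Q) (rat_coset a) (rat_coset f)"
    if "Q \<in> coset_image ` U'" for Q
  proof -
    obtain q where q: "q \<in> U" "q \<in> hSpec ring_hyp" "f \<notin> q" "Q = coset_image q"
      using \<open>Q \<in> coset_image ` U'\<close> unfolding U'_def by blast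
    then show ?thesis
      using rat_coset_in_coset_image_iff[OF hSpec_ring_hyp_hideal[OF q(2)]] hfrac_rat_quot[OF q(2,3)]
        quot_frac_section_coset_image[OF zopen_subset_hSpec[OF U] q(1)] af(2) by simp
  qed
  moreover have "rat_coset a \<in> hcarrier rat_quot" "rat_coset f \<in> hcarrier rat_quot"
    by (simp_all add: hcarrier_rat_quot)
  ultimately show "\<exists>W a f. zopen rat_quot W \<and> P \<in> W \<and> W \<subseteq> coset_image ` U \<and> a \<in> hcarrier rat_quot \<and>
      f \<in> hcarrier rat_quot \<and> (\<forall>Q\<in>W. f \<notin> Q \<and> quot_frac_section U v Q = hfrac rat_quot (hcarrier rat_quot - Q) a f)"
    by (intro exI[of _ "coset_image ` U'"] exI[of _ "rat_coset a"] exI[of _ "rat_coset f"] conjI ballI) simp_all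
qed

lemma hsections_rat_quot_locally_FractE:
  assumes U: "U \<subseteq> hSpec (ring_hyp :: 'a hyperring)" and s: "s \<in> hsections rat_quot (coset_image ` U)"
    and p: "p \<in> U"
  obtains U' a f where "zopen ring_hyp U'" "p \<in> U'"
    "\<And>q. q \<in> U' \<Longrightarrow> f \<notin> q \<and> s (coset_image q) = quot_frac_class q (Fract a f)"
proof -
  obtain W a' f' where W: "zopen rat_quot W" "coset_image p \<in> W" "W \<subseteq> coset_image ` U"
    and af': "a' \<in> hcarrier rat_quot" "f' \<in> hcarrier rat_quot"
    and frac: "\<forall>Q\<in>W. f' \<notin> Q \<and> s Q = hfrac rat_quot (hcarrier rat_quot - Q) a' f'"
    by (rule hsections_locally_hfracE[OF s imageI[OF p]])
  obtain a f where af: "a' = rat_coset a" "f' = rat_coset f"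
    using af' unfolding hcarrier_rat_quot by blast
  obtain U' where U': "zopen ring_hyp U'" "W = coset_image ` U'"
    using W(1) unfolding zopen_rat_quot_iff by blast
  have frac': "f \<notin> q \<and> s (coset_image q) = quot_frac_class q (Fract a f)" if "q \<in> U'" for q
  proof -
    have q: "q \<in> hSpec ring_hyp"
      using that zopen_subset_hSpec[OF U'(1)] by blast
    then have "f \<notin> q"
      using frac that rat_coset_in_coset_image_iff[OF hSpec_ring_hyp_hideal[OF q]] unfolding U'(2) af by blast
    then show ?thesis
      using frac that hfrac_rat_quot[OF q] unfolding U'(2) af by simp
  qed
  have "p \<in> U'"
    using W(2) p U coset_image_in_image_iff[OF zopen_subset_hSpec[OF U'(1)]] unfolding U'(2) by blast
  then show thesis
    using that[OF U'(1)] frac' by blast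
qed

lemma hsections_rat_quotE:
  assumes U: "zopen ring_hyp (U :: 'a set set)" "U \<noteq> {}"
    and s: "s \<in> hsections rat_quot (coset_image ` U)"
  obtains v where "regular_on U v" "s = quot_frac_section U v"
proof -
  have Us: "U \<subseteq> hSpec ring_hyp"
    using zopen_subset_hSpec[OF U(1)] .
  have "s (coset_image {0}) \<in> hloc rat_quot (coset_image {0})"
    using hsections_hloc[OF s] zero_in_zopen_ring_hyp[OF U] by blast
  then obtain v where v: "regular_at {0} v" "s (coset_image {0}) = quot_frac_class {0} v"
    unfolding hloc_rat_quot[OF zero_in_hSpec_ring_hyp] by blast
  have "regular_at p v \<and> s (coset_image p) = quot_frac_class p v" if p: "p \<in> U" for p
  proof -
    obtain U' a f where U': "zopen ring_hyp U'" "p \<in> U'"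
      and frac: "\<And>q. q \<in> U' \<Longrightarrow> f \<notin> q \<and> s (coset_image q) = quot_frac_class q (Fract a f)"
      by (rule hsections_rat_quot_locally_FractE[OF Us s p]) blast
    have "{0} \<in> U'"
      using zero_in_zopen_ring_hyp[OF U'(1)] U'(2) by blast
    then have "quot_frac_class {0} v = quot_frac_class {0} (Fract a f)"
      using frac v(2) by simp
    then obtain c where c: "c \<in> rat_fracs" "Fract a f = c * v"
      by (rule quot_frac_class_eqE[OF zero_in_hSpec_ring_hyp v(1)])
    have "v = inverse c * Fract a f"
      using c rat_fracs_nonzero[OF c(1)] by (simp add: mult.assoc[symmetric])
    moreover have "regular_at p (Fract a f)"
      using frac[OF U'(2)] unfolding regular_at_def by blast
    ultimately have "regular_at p v"
      using regular_at_rat_fracs_mult rat_fracs_inverse[OF c(1)] by simp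
    moreover have "s (coset_image p) = quot_frac_class p v"
      using frac[OF U'(2)] c quot_frac_class_rat_fracs_mult by simp
    ultimately show ?thesis ..
  qed
  then have "regular_on U v" "s = quot_frac_section U v"
    using hsections_undefined[OF s] quot_frac_section_coset_image[OF Us] unfolding regular_on_def quot_frac_section_def
    by (auto simp: fun_eq_iff coset_preimage_image_hSpec)
  then show thesis ..
qed

lemma hsections_rat_quot:
  assumes "zopen ring_hyp (U :: 'a set set)" "U \<noteq> {}"
  shows "hsections rat_quot (coset_image ` U) = quot_frac_section U ` Collect (regular_on U)"
  using assms quot_frac_section_in_hsections hsections_rat_quotE by blast

lemma hplus_hsheaf_rat_quot:
  assumes U: "zopen ring_hyp (U :: 'a set set)" "U \<noteq> {}" and v: "regular_on U v" and w: "regular_on U w"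
  shows "hplus (hsheaf rat_quot (coset_image ` U)) (quot_frac_section U v) (quot_frac_section U w) =
    quot_frac_section U ` rat_combinations v w"
proof -
  have Us: "U \<subseteq> hSpec ring_hyp"
    using zopen_subset_hSpec[OF U(1)] .
  have pointwise: "quot_frac_section U u P \<in> loc_plus rat_quot P (quot_frac_section U v P) (quot_frac_section U w P)
      \<longleftrightarrow> quot_frac_class p u \<in> quot_frac_class p ` rat_combinations v w"
    if "p \<in> U" "P = coset_image p" for p P u
  proof -
    have "regular_at p v" "regular_at p w" "p \<in> hSpec ring_hyp"
      using that v w Us unfolding regular_on_def by auto
    then show ?thesis
      using that loc_plus_rat_quot quot_frac_section_coset_image[OF Us] by simp
  qed
  obtain p where p: "p \<in> U"
    using U(2) by blast
  have "hplus (hsheaf rat_quot (coset_image ` U)) (quot_frac_section U v) (quot_frac_section U w) =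
      {r \<in> quot_frac_section U ` Collect (regular_on U).
        \<forall>P\<in>coset_image ` U. r P \<in> loc_plus rat_quot P (quot_frac_section U v P) (quot_frac_section U w P)}"
    by (simp add: hsheaf_def hsections_rat_quot[OF U])
  also have "\<dots> = quot_frac_section U ` rat_combinations v w"
  proof (intro equalityI subsetI)
    fix r assume "r \<in> {r \<in> quot_frac_section U ` Collect (regular_on U).
        \<forall>P\<in>coset_image ` U. r P \<in> loc_plus rat_quot P (quot_frac_section U v P) (quot_frac_section U w P)}"
    then obtain u where u: "regular_on U u" "r = quot_frac_section U u"
      and "r (coset_image p) \<in> loc_plus rat_quot (coset_image p)
        (quot_frac_section U v (coset_image p)) (quot_frac_section U w (coset_image p))"
      using p by blast
    then have "quot_frac_class p u \<in> quot_frac_class p ` rat_combinations v w"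
      using pointwise[OF p refl] by simp
    then obtain x where x: "x \<in> rat_combinations v w" "quot_frac_class p x = quot_frac_class p u"
      by auto
    moreover have "regular_at p x"
      using regular_on_rat_combinations[OF Us v w] x(1) p unfolding regular_on_def by blast
    then obtain c where "c \<in> rat_fracs" "u = c * x"
      using quot_frac_class_eqE[OF subsetD[OF Us p] _ x(2)] by blast
    then have "r = quot_frac_section U x"
      using u(2) quot_frac_section_rat_fracs_mult[OF Us] by simp
    then show "r \<in> quot_frac_section U ` rat_combinations v w"
      using x(1) by blast
  next
    fix r assume "r \<in> quot_frac_section U ` rat_combinations v w"
    then obtain x where x: "x \<in> rat_combinations v w" "r = quot_frac_section U x"
      by blast
    moreover have "regular_on U x"
      using regular_on_rat_combinations[OF Us v w] x(1) by blast
    ultimately show "r \<in> {r \<in> quot_frac_section U ` Collect (regular_on U).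
        \<forall>P\<in>coset_image ` U. r P \<in> loc_plus rat_quot P (quot_frac_section U v P) (quot_frac_section U w P)}"
      using pointwise by blast
  qed
  finally show ?thesis .
qed

end

section \<open>The quotient of \<open>O\<^sub>X(U)\<close> by the constants \<open>\<rat>\<^sup>\<times>\<close>\<close>

context rat_domain
begin

lemma rat_fracs_mult_image:
  assumes "(c :: 'a fract) \<in> rat_fracs"
  shows "(\<lambda>d. d * c) ` rat_fracs = rat_fracs"
proof (intro equalityI subsetI)
  fix d :: "'a fract" assume "d \<in> rat_fracs"
  then have "d = (d * inverse c) * c" "d * inverse c \<in> rat_fracs"
    using rat_fracs_nonzero[OF assms] rat_fracs_mult rat_fracs_inverse[OF assms] by (simp_all add: mult.assoc)
  then show "d \<in> (\<lambda>d. d * c) ` rat_fracs"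
    by blast
qed (use assms rat_fracs_mult in blast)

context
  fixes U :: "'a set set"
  assumes U: "U \<subseteq> hSpec ring_hyp"
begin

lemma const_sec_rat_units: "const_sec ring_hyp U ` rat_units = frac_section U ` rat_fracs"
  unfolding rat_fracs_def image_image using const_sec_ring_hyp[OF U] by simp

lemma hcoset_frac_section:
  assumes v: "regular_on U v"
  shows "hcoset (hsheaf ring_hyp U) (const_sec ring_hyp U ` rat_units) (frac_section U v) =
    (\<lambda>c. frac_section U (c * v)) ` rat_fracs"
proof -
  have "htimes (hsheaf ring_hyp U) (frac_section U v) (frac_section U c) = frac_section U (c * v)"
    if "c \<in> rat_fracs" for c
    using htimes_hsheaf_ring_hyp[OF U v regular_on_rat_fracs[OF U that]] by (simp add: mult.commute)
  moreover have "hcoset (hsheaf ring_hyp U) (const_sec ring_hyp U ` rat_units) (frac_section U v) =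
      (\<lambda>c. htimes (hsheaf ring_hyp U) (frac_section U v) (frac_section U c)) ` rat_fracs"
    unfolding hcoset_def const_sec_rat_units by auto
  ultimately show ?thesis
    by simp
qed

lemma hcoset_frac_section_eq_iff:
  assumes p: "p \<in> U" and v: "regular_on U v" and w: "regular_on U w"
  shows "hcoset (hsheaf ring_hyp U) (const_sec ring_hyp U ` rat_units) (frac_section U v) =
      hcoset (hsheaf ring_hyp U) (const_sec ring_hyp U ` rat_units) (frac_section U w) \<longleftrightarrow>
    (\<exists>c\<in>rat_fracs. w = c * v)"
proof
  assume "hcoset (hsheaf ring_hyp U) (const_sec ring_hyp U ` rat_units) (frac_section U v) =
      hcoset (hsheaf ring_hyp U) (const_sec ring_hyp U ` rat_units) (frac_section U w)"
  then have "frac_section U (1 * w) \<in> (\<lambda>c. frac_section U (c * v)) ` rat_fracs"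
    unfolding hcoset_frac_section[OF v] hcoset_frac_section[OF w] using rat_fracs_one by blast
  then obtain c where c: "c \<in> rat_fracs" "frac_section U (c * v) = frac_section U w"
    by auto
  have "c * v = w"
    using regular_on_eq_frac_section[OF regular_on_rat_fracs_mult[OF v c(1)] p c(2)] .
  then show "\<exists>c\<in>rat_fracs. w = c * v"
    using c(1) by blast
next
  assume "\<exists>c\<in>rat_fracs. w = c * v"
  then obtain c where c: "c \<in> rat_fracs" "w = c * v"
    by blast
  have "(\<lambda>d. frac_section U (d * w)) ` rat_fracs = (\<lambda>d. frac_section U (d * v)) ` ((\<lambda>d. d * c) ` rat_fracs)"
    unfolding c(2) image_image by (simp add: mult.assoc)
  then show "hcoset (hsheaf ring_hyp U) (const_sec ring_hyp U ` rat_units) (frac_section U v) =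
      hcoset (hsheaf ring_hyp U) (const_sec ring_hyp U ` rat_units) (frac_section U w)"
    unfolding hcoset_frac_section[OF v] hcoset_frac_section[OF w] rat_fracs_mult_image[OF c(1)] by simp
qed

end

context
  fixes U :: "'a set set"
  assumes U: "zopen ring_hyp U" "U \<noteq> {}"
begin

lemma hcarrier_hsheaf_ring_hyp: "hcarrier (hsheaf ring_hyp U) = frac_section U ` Collect (regular_on U)"
  using hsections_ring_hyp[OF U] by (simp add: hsheaf_def)

lemma hplus_htimes_hsheaf_ring_hyp:
  assumes "regular_on U v" "regular_on U w" "c1 \<in> rat_fracs" "c2 \<in> rat_fracs"
  shows "hplus (hsheaf ring_hyp U)
      (htimes (hsheaf ring_hyp U) (frac_section U v) (frac_section U c1))
      (htimes (hsheaf ring_hyp U) (frac_section U w) (frac_section U c2)) =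
    {frac_section U (c1 * v + c2 * w)}"
proof -
  have Us: "U \<subseteq> hSpec ring_hyp"
    using zopen_subset_hSpec[OF U(1)] .
  then have "regular_on U c1" "regular_on U c2"
    using regular_on_rat_fracs assms(3,4) by blast+
  then show ?thesis
    using assms htimes_hsheaf_ring_hyp[OF Us] hplus_hsheaf_ring_hyp[OF U] regular_on_mult[OF Us]
    by (simp add: mult.commute)
qed

lemma hcarrier_quot_hsheaf:
  "hcarrier (hquot (hsheaf ring_hyp U) (const_sec ring_hyp U ` rat_units)) =
    (\<lambda>v. hcoset (hsheaf ring_hyp U) (const_sec ring_hyp U ` rat_units) (frac_section U v)) ` Collect (regular_on U)"
  using hsections_ring_hyp[OF U] by (auto simp: hquot_def hsheaf_def)

lemma htimes_quot_hsheaf: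
  assumes v: "regular_on U v" and w: "regular_on U w"
  shows "htimes (hquot (hsheaf ring_hyp U) (const_sec ring_hyp U ` rat_units))
      (hcoset (hsheaf ring_hyp U) (const_sec ring_hyp U ` rat_units) (frac_section U v))
      (hcoset (hsheaf ring_hyp U) (const_sec ring_hyp U ` rat_units) (frac_section U w)) =
    hcoset (hsheaf ring_hyp U) (const_sec ring_hyp U ` rat_units) (frac_section U (v * w))"
proof -
  let ?B = "hsheaf ring_hyp U" and ?G = "const_sec ring_hyp U ` rat_units"
  have Us: "U \<subseteq> hSpec ring_hyp"
    using zopen_subset_hSpec[OF U(1)] .
  obtain p where p: "p \<in> U"
    using U(2) by blast
  have well_defined: "hcoset ?B ?G (htimes ?B x' y') = hcoset ?B ?G (htimes ?B (frac_section U v) (frac_section U w))"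
    if xy: "x' \<in> hcarrier ?B" "y' \<in> hcarrier ?B" "hcoset ?B ?G (frac_section U v) = hcoset ?B ?G x'"
      "hcoset ?B ?G (frac_section U w) = hcoset ?B ?G y'" for x' y'
  proof -
    obtain v' w' where v': "regular_on U v'" "x' = frac_section U v'"
      and w': "regular_on U w'" "y' = frac_section U w'"
      using xy(1,2) unfolding hcarrier_hsheaf_ring_hyp by blast
    obtain c d where "c \<in> rat_fracs" "d \<in> rat_fracs" "v' = c * v" "w' = d * w"
      using xy(3,4) hcoset_frac_section_eq_iff[OF Us p v v'(1)] hcoset_frac_section_eq_iff[OF Us p w w'(1)]
      unfolding v'(2) w'(2) by blast
    moreover from this have "v' * w' = (c * d) * (v * w)"
      by (simp add: ac_simps)
    ultimately show ?thesis
      unfolding v'(2) w'(2)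
      using htimes_hsheaf_ring_hyp[OF Us] v w v'(1) w'(1) rat_fracs_mult
        hcoset_frac_section_eq_iff[OF Us p regular_on_mult[OF Us v w] regular_on_mult[OF Us v'(1) w'(1)]]
      by auto
  qed
  have "frac_section U v \<in> hcarrier ?B" "frac_section U w \<in> hcarrier ?B"
    using v w unfolding hcarrier_hsheaf_ring_hyp by blast+
  from htimes_hquot_hcoset[OF this well_defined] show ?thesis
    unfolding htimes_hsheaf_ring_hyp[OF Us v w] .
qed

lemma hplus_quot_hsheaf:
  assumes v: "regular_on U v" and w: "regular_on U w"
  shows "hplus (hquot (hsheaf ring_hyp U) (const_sec ring_hyp U ` rat_units))
      (hcoset (hsheaf ring_hyp U) (const_sec ring_hyp U ` rat_units) (frac_section U v))
      (hcoset (hsheaf ring_hyp U) (const_sec ring_hyp U ` rat_units) (frac_section U w)) =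
    (\<lambda>x. hcoset (hsheaf ring_hyp U) (const_sec ring_hyp U ` rat_units) (frac_section U x)) ` rat_combinations v w"
proof -
  let ?B = "hsheaf ring_hyp U" and ?G = "const_sec ring_hyp U ` rat_units"
  let ?c = "\<lambda>x. hcoset ?B ?G (frac_section U x)"
  have Us: "U \<subseteq> hSpec ring_hyp"
    using zopen_subset_hSpec[OF U(1)] .
  obtain p where p: "p \<in> U"
    using U(2) by blast
  have "hplus (hquot ?B ?G) (?c v) (?c w) =
      {hcoset ?B ?G q | q x y t s. x \<in> hcarrier ?B \<and> y \<in> hcarrier ?B \<and> ?c v = hcoset ?B ?G x \<and>
        ?c w = hcoset ?B ?G y \<and> t \<in> ?G \<and> s \<in> ?G \<and> q \<in> hplus ?B (htimes ?B x t) (htimes ?B y s)}"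
    by (simp add: hquot_def)
  also have "\<dots> = ?c ` rat_combinations v w"
  proof (intro equalityI subsetI)
    fix Z assume "Z \<in> {hcoset ?B ?G q | q x y t s. x \<in> hcarrier ?B \<and> y \<in> hcarrier ?B \<and> ?c v = hcoset ?B ?G x \<and>
        ?c w = hcoset ?B ?G y \<and> t \<in> ?G \<and> s \<in> ?G \<and> q \<in> hplus ?B (htimes ?B x t) (htimes ?B y s)}"
    then obtain q v' w' c1 c2 where v': "regular_on U v'" "?c v = ?c v'" and w': "regular_on U w'" "?c w = ?c w'"
      and c: "c1 \<in> rat_fracs" "c2 \<in> rat_fracs"
      and q: "q \<in> hplus ?B (htimes ?B (frac_section U v') (frac_section U c1)) (htimes ?B (frac_section U w') (frac_section U c2))"
      and Z: "Z = hcoset ?B ?G q"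
      unfolding hcarrier_hsheaf_ring_hyp const_sec_rat_units[OF Us] by blast
    obtain c d where cd: "c \<in> rat_fracs" "d \<in> rat_fracs" "v' = c * v" "w' = d * w"
      using v'(2) w'(2) hcoset_frac_section_eq_iff[OF Us p v v'(1)] hcoset_frac_section_eq_iff[OF Us p w w'(1)] by blast
    have "Z = ?c ((c1 * c) * v + (c2 * d) * w)"
      using Z q hplus_htimes_hsheaf_ring_hyp[OF v'(1) w'(1) c] unfolding cd(3,4) by (simp add: mult.assoc)
    moreover have "c1 * c \<in> rat_fracs" "c2 * d \<in> rat_fracs"
      using rat_fracs_mult c cd by blast+
    ultimately show "Z \<in> ?c ` rat_combinations v w"
      unfolding rat_combinations_def by blast
  next
    fix Z assume "Z \<in> ?c ` rat_combinations v w"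
    then obtain c1 c2 where c: "c1 \<in> rat_fracs" "c2 \<in> rat_fracs" and Z: "Z = ?c (c1 * v + c2 * w)"
      unfolding rat_combinations_def by blast
    have "frac_section U (c1 * v + c2 * w) \<in>
        hplus ?B (htimes ?B (frac_section U v) (frac_section U c1)) (htimes ?B (frac_section U w) (frac_section U c2))"
      using hplus_htimes_hsheaf_ring_hyp[OF v w c] by simp
    moreover have "frac_section U v \<in> hcarrier ?B" "frac_section U w \<in> hcarrier ?B"
      "frac_section U c1 \<in> ?G" "frac_section U c2 \<in> ?G"
      using v w c unfolding hcarrier_hsheaf_ring_hyp const_sec_rat_units[OF Us] by blast+
    ultimately show "Z \<in> {hcoset ?B ?G q | q x y t s. x \<in> hcarrier ?B \<and> y \<in> hcarrier ?B \<and> ?c v = hcoset ?B ?G x \<and>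
        ?c w = hcoset ?B ?G y \<and> t \<in> ?G \<and> s \<in> ?G \<and> q \<in> hplus ?B (htimes ?B x t) (htimes ?B y s)}"
      unfolding Z by blast
  qed
  finally show ?thesis .
qed

end

end

context rat_domain
begin

lemma hyperring_iso_hsheaf_rat_quot:
  assumes U: "zopen ring_hyp (U :: 'a set set)" "U \<noteq> {}"
  shows "\<exists>f. hyperring_iso f (hsheaf rat_quot (coset_image ` U))
    (hquot (hsheaf ring_hyp U) (const_sec ring_hyp U ` rat_units))"
proof (rule hyperring_iso_common_parametrization)
  let ?S = "Collect (regular_on U)"
  let ?\<beta> = "\<lambda>v. hcoset (hsheaf ring_hyp U) (const_sec ring_hyp U ` rat_units) (frac_section U v)"
  have Us: "U \<subseteq> hSpec ring_hyp"
    using zopen_subset_hSpec[OF U(1)] .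
  show "hcarrier (hsheaf rat_quot (coset_image ` U)) = quot_frac_section U ` ?S"
    using hsections_rat_quot[OF U] by (simp add: hsheaf_def)
  show "hcarrier (hquot (hsheaf ring_hyp U) (const_sec ring_hyp U ` rat_units)) = ?\<beta> ` ?S"
    using hcarrier_quot_hsheaf[OF U] .
  obtain p where p: "p \<in> U"
    using U(2) by blast
  show "quot_frac_section U v = quot_frac_section U w \<longleftrightarrow> ?\<beta> v = ?\<beta> w" if "v \<in> ?S" "w \<in> ?S" for v w
    using that quot_frac_section_eq_iff[OF Us p] hcoset_frac_section_eq_iff[OF Us p] by simp
  show "v * w \<in> ?S \<and>
      htimes (hsheaf rat_quot (coset_image ` U)) (quot_frac_section U v) (quot_frac_section U w) =
        quot_frac_section U (v * w) \<and>
      htimes (hquot (hsheaf ring_hyp U) (const_sec ring_hyp U ` rat_units)) (?\<beta> v) (?\<beta> w) = ?\<beta> (v * w)"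
    if "v \<in> ?S" "w \<in> ?S" for v w
    using that regular_on_mult[OF Us] htimes_hsheaf_rat_quot[OF Us] htimes_quot_hsheaf[OF U] by simp
  show "rat_combinations v w \<subseteq> ?S \<and>
      hplus (hsheaf rat_quot (coset_image ` U)) (quot_frac_section U v) (quot_frac_section U w) =
        quot_frac_section U ` rat_combinations v w \<and>
      hplus (hquot (hsheaf ring_hyp U) (const_sec ring_hyp U ` rat_units)) (?\<beta> v) (?\<beta> w) =
        ?\<beta> ` rat_combinations v w"
    if "v \<in> ?S" "w \<in> ?S" for v w
    using that regular_on_rat_combinations[OF Us] hplus_hsheaf_rat_quot[OF U] hplus_quot_hsheaf[OF U] by simp
  show "Fract 0 1 \<in> ?S" "Fract 1 1 \<in> ?S"
    using regular_on_Fract_one[OF Us] by simp_all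
  show "hzero (hsheaf rat_quot (coset_image ` U)) = quot_frac_section U (Fract 0 1)"
    "hone (hsheaf rat_quot (coset_image ` U)) = quot_frac_section U (Fract 1 1)"
    using const_sec_rat_quot[OF Us] by (simp_all add: hsheaf_def hzero_rat_quot hone_rat_quot)
  show "hzero (hquot (hsheaf ring_hyp U) (const_sec ring_hyp U ` rat_units)) = ?\<beta> (Fract 0 1)"
    "hone (hquot (hsheaf ring_hyp U) (const_sec ring_hyp U ` rat_units)) = ?\<beta> (Fract 1 1)"
    using const_sec_ring_hyp[OF Us] by (simp_all add: hquot_def hsheaf_def)
qed

lemma coset_preimage_open:
  assumes "U \<subseteq> hSpec (ring_hyp :: 'a hyperring)"
  shows "{P \<in> hSpec rat_quot. coset_preimage P \<in> U} = coset_image ` U"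
  using assms coset_preimage_image_hSpec unfolding hSpec_rat_quot by auto

lemma zopen_coset_preimage_open:
  assumes "zopen ring_hyp (U :: 'a set set)"
  shows "zopen rat_quot {P \<in> hSpec rat_quot. coset_preimage P \<in> U}"
  unfolding coset_preimage_open[OF zopen_subset_hSpec[OF assms]] zopen_rat_quot_iff using assms by blast

lemma zopen_image_coset_preimage:
  assumes "zopen rat_quot W"
  shows "zopen (ring_hyp :: 'a hyperring) (coset_preimage ` W)"
proof -
  obtain U where U: "zopen ring_hyp U" "W = coset_image ` U"
    using assms unfolding zopen_rat_quot_iff by blast
  have "coset_preimage ` W = (\<lambda>p. coset_preimage (coset_image p)) ` U"
    unfolding U(2) image_image ..
  also have "\<dots> = U"
    using coset_preimage_image_hSpec zopen_subset_hSpec[OF U(1)] by (simp add: subset_iff cong: image_cong)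
  finally show ?thesis
    using U(1) by simp
qed

lemma hyperring_iso_hsheaf_coset_preimage:
  assumes "zopen ring_hyp (U :: 'a set set)" "U \<noteq> {}"
  shows "\<exists>f. hyperring_iso f (hsheaf rat_quot {P \<in> hSpec rat_quot. coset_preimage P \<in> U})
    (hquot (hsheaf ring_hyp U) (const_sec ring_hyp U ` rat_units))"
  unfolding coset_preimage_open[OF zopen_subset_hSpec[OF assms(1)]] using hyperring_iso_hsheaf_rat_quot[OF assms] .

end

theorem proposition4p35:
  fixes HA :: "'a::idom hyperring"
    and QA :: "'a set" and R :: "'a set hyperring"
    and \<pi> :: "'a \<Rightarrow> 'a set" and \<phi> :: "'a set set \<Rightarrow> 'a set"
  assumes contains_Q: "\<forall>n::nat. n \<noteq> 0 \<longrightarrow> (of_nat n :: 'a) dvd 1"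
  defines "HA \<equiv> ring_hyp"
    and "QA \<equiv> rat_units"
    and "R \<equiv> hquot HA QA"
    and "\<pi> \<equiv> hcoset HA QA"
    and "\<phi> \<equiv> (\<lambda>P. {a. \<pi> a \<in> P})"
  shows "(bij_betw \<phi> (hSpec R) (hSpec HA)
       \<and> (\<forall>U. zopen HA U \<longrightarrow> zopen R {P \<in> hSpec R. \<phi> P \<in> U})
       \<and> (\<forall>W. zopen R W \<longrightarrow> zopen HA (\<phi> ` W)))
       \<and> (\<forall>U. zopen HA U \<and> U \<noteq> {} \<longrightarrow>
       (\<exists>f. hyperring_iso f (hsheaf R {P \<in> hSpec R. \<phi> P \<in> U})
                             (hquot (hsheaf HA U) (const_sec HA U ` QA))))"
proof -
  interpret rat_domain "TYPE('a)"
    using contains_Q by unfold_locales blast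
  have "\<phi> = coset_preimage"
    unfolding \<phi>_def \<pi>_def QA_def HA_def coset_preimage_def ..
  then show ?thesis
    unfolding R_def HA_def QA_def
    using bij_betw_coset_preimage_hSpec zopen_coset_preimage_open zopen_image_coset_preimage
      hyperring_iso_hsheaf_coset_preimage by blast
qed

end
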